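(* Let $(G,L_G)$ and $(H,L_H)$ be right-resolving labeled graphs presenting sofic shifts $Y=L_G(X_G)$ and $Z=L_H(X_H)$, respectively. Assume that there are conjugacies $\psi : Y \to Z$ and $\phi : X_G \to X_H$ such that $L_H\circ \phi = \psi \circ L_G$. Then there is a unique conjugacy $\phi' : X_{G'} \to X_{H'}$ such that $L_{H'}\circ \phi' = \psi\circ L_{G'}$, where $(G',L_{G'})$ and $(H',L_{H'})$ are the labeled graphs obtained from $(G,L_G)$ and $(H,L_H)$ by the construction described in the context.
   Context: A labeled graph $(H,L_H)$ consists of a finite directed graph $H$ with vertex set $V_H$, edge set $E_H$, source and terminal maps $s_H,t_H:E_H\to V_H$, without sinks or sources, together with a labeling $L_H:E_H\to A$ into a finite alphabet $A$. $X_H\subseteq E_H^{\mathbb Z}$ is the edge shift of bi-infinite paths, and $L_H$ is applied coordinatewise to paths, giving a factor map $L_H:X_H\to L_H(X_H)$; $(H,L_H)$ presents the sofic shift $L_H(X_H)$. It is right-resolving if distinct edges with the same source have distinct labels. A conjugacy is a shift-commuting homeomorphism. Subset construction: given a right-resolving $(H,L_H)$ presenting $Y$, the labeled graph $(H'',L_{H''})$ has as vertices the non-empty subsets of $V_H$; for vertices $F,F'$ and a symbol $a\in A$ there is an edge from $F$ to $F'$ labeled $a$ when $F\subseteq\{s_H(e): e\in E_H, L_H(e)=a\}$ and $F'=\{t_H(e): e\in E_H, s_H(e)\in F, L_H(e)=a\}$. Then $H''$ is trimmed by repeatedly removing sinks and sources, so that it has neither. Since $(H,L_H)$ is right-resolving,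 $L_H^{-1}(y)$ is finite for each $y\in Y$; define $\beta_H(y)\in X_{H''}$ as the bi-infinite path whose $i$-th edge is the edge labeled $y_i$ from $F_i$ to $F_{i+1}$, where $F_i=\{s_H(k_i): k\in L_H^{-1}(y)\}$. A vertex $v$ of a graph is recurrent if there is a path from $v$ to $v$; two recurrent vertices are equivalent if each can be reached from the other by a path; an equivalence class $C$ is a component, $X_C$ denotes the edge shift of the subgraph with vertex set $C$ and all edges with source and terminal vertex in $C$. A point $x$ of $X_{H''}$ is backward asymptotic to $X_C$ if there are $u\in X_C$ and $N\in\mathbb Z$ with $x_i=u_i$ for all $i\le N$. Let $H'$ be the subgraph of $H''$ whose vertices are all vertices of $H''$ reachable by a path (possibly of length zero) from a vertex of some component $C$ of $H''$ for which there exists $y\in Y$ with $\beta_H(y)$ backward asymptotic to $X_C$, and whose edges are all edges of $H''$ with source in this vertex set; $L_{H'}$ is the restriction of $L_{H''}$. $(G',L_{G'})$ is defined in the same way from $(G,L_G)$. *)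

theory Defs
  imports "HOL-Analysis.Analysis" "Graph_Theory.Digraph"
begin

text \<open>A graph is a finite directed graph (multi-edges allowed), given as a
  Graph_Theory pre_digraph; tail = source map, head = terminal map.\<close>

definition no_sinks_sources :: "('v,'e) pre_digraph \<Rightarrow> bool" where
  "no_sinks_sources G \<longleftrightarrow>
     (\<forall>v\<in>verts G. (\<exists>e\<in>arcs G. tail G e = v) \<and> (\<exists>e\<in>arcs G. head G e = v))"

definition graph_ok :: "('v,'e) pre_digraph \<Rightarrow> bool" where
  "graph_ok G \<longleftrightarrow> fin_digraph G \<and> no_sinks_sources G"

definition right_resolving :: "('v,'e) pre_digraph \<Rightarrow> ('e \<Rightarrow> 'a) \<Rightarrow> bool" where
  "right_resolving G L \<longleftrightarrow>
     (\<forall>e\<in>arcs G. \<forall>e'\<in>arcs G. tail G e = tail G e' \<and> L e = L e' \<longrightarrow> e = e')"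

definition edge_shift :: "('v,'e) pre_digraph \<Rightarrow> (int \<Rightarrow> 'e) set" where
  "edge_shift G = {x. \<forall>i. x i \<in> arcs G \<and> head G (x i) = tail G (x (i + 1))}"

definition label_map :: "('e \<Rightarrow> 'a) \<Rightarrow> (int \<Rightarrow> 'e) \<Rightarrow> (int \<Rightarrow> 'a)" where
  "label_map L x = (\<lambda>i. L (x i))"

definition sofic :: "('v,'e) pre_digraph \<Rightarrow> ('e \<Rightarrow> 'a) \<Rightarrow> (int \<Rightarrow> 'a) set" where
  "sofic G L = label_map L ` edge_shift G"

definition shift :: "(int \<Rightarrow> 'a) \<Rightarrow> (int \<Rightarrow> 'a)" where
  "shift x = (\<lambda>i. x (i + 1))"

definition seq_top :: "(int \<Rightarrow> 'a) topology" where
  "seq_top = product_topology (\<lambda>_. discrete_topology UNIV) UNIV"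

definition conjugacy :: "(int \<Rightarrow> 'a) set \<Rightarrow> (int \<Rightarrow> 'b) set \<Rightarrow> ((int \<Rightarrow> 'a) \<Rightarrow> (int \<Rightarrow> 'b)) \<Rightarrow> bool" where
  "conjugacy X Y f \<longleftrightarrow>
     homeomorphic_map (subtopology seq_top X) (subtopology seq_top Y) f \<and>
     (\<forall>x\<in>X. f (shift x) = shift (f x))"

definition subset_graph :: "('v,'e) pre_digraph \<Rightarrow> ('e \<Rightarrow> 'a)
      \<Rightarrow> ('v set, 'v set \<times> 'a \<times> 'v set) pre_digraph" where
  "subset_graph H L =
     \<lparr> verts = {F. F \<noteq> {} \<and> F \<subseteq> verts H},
       arcs = {(F, a, F'). F \<noteq> {} \<and> F \<subseteq> verts H \<and> a \<in> L ` arcs H \<and>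
                 F \<subseteq> {tail H e | e. e \<in> arcs H \<and> L e = a} \<and>
                 F' = {head H e | e. e \<in> arcs H \<and> tail H e \<in> F \<and> L e = a} \<and>
                 F' \<noteq> {} \<and> F' \<subseteq> verts H},
       tail = fst,
       head = (\<lambda>p. snd (snd p)) \<rparr>"

definition subset_label :: "'v set \<times> 'a \<times> 'v set \<Rightarrow> 'a" where
  "subset_label p = fst (snd p)"

definition trim_step :: "('v,'e) pre_digraph \<Rightarrow> ('v,'e) pre_digraph" where
  "trim_step G =
     (let V' = {v\<in>verts G. (\<exists>e\<in>arcs G. tail G e = v) \<and> (\<exists>e\<in>arcs G. head G e = v)}
      in G\<lparr> verts := V', arcs := {e\<in>arcs G. tail G e \<in> V' \<and> head G e \<in> V'} \<rparr>)"

definition trim :: "('v,'e) pre_digraph \<Rightarrow> ('v,'e) pre_digraph" where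
  "trim G = (let n = (LEAST n. trim_step ((trim_step ^^ n) G) = (trim_step ^^ n) G)
             in (trim_step ^^ n) G)"

definition H2 :: "('v,'e) pre_digraph \<Rightarrow> ('e \<Rightarrow> 'a)
      \<Rightarrow> ('v set, 'v set \<times> 'a \<times> 'v set) pre_digraph" where
  "H2 H L = trim (subset_graph H L)"

definition beta :: "('v,'e) pre_digraph \<Rightarrow> ('e \<Rightarrow> 'a) \<Rightarrow> (int \<Rightarrow> 'a)
      \<Rightarrow> (int \<Rightarrow> 'v set \<times> 'a \<times> 'v set)" where
  "beta H L y =
     (let F = (\<lambda>i. {tail H (k i) | k. k \<in> edge_shift H \<and> label_map L k = y})
      in (\<lambda>i. (F i, y i, F (i + 1))))"

definition edge_rel :: "('v,'e) pre_digraph \<Rightarrow> ('v \<times> 'v) set" where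
  "edge_rel G = {(tail G e, head G e) | e. e \<in> arcs G}"

definition recurrent :: "('v,'e) pre_digraph \<Rightarrow> 'v \<Rightarrow> bool" where
  "recurrent G v \<longleftrightarrow> v \<in> verts G \<and> (v, v) \<in> (edge_rel G)\<^sup>+"

definition components :: "('v,'e) pre_digraph \<Rightarrow> 'v set set" where
  "components G = {{w. recurrent G w \<and> (v, w) \<in> (edge_rel G)\<^sup>* \<and> (w, v) \<in> (edge_rel G)\<^sup>*}
                   | v. recurrent G v}"

definition induced_sub :: "('v,'e) pre_digraph \<Rightarrow> 'v set \<Rightarrow> ('v,'e) pre_digraph" where
  "induced_sub G C = G\<lparr> verts := C, arcs := {e\<in>arcs G. tail G e \<in> C \<and> head G e \<in> C} \<rparr>"

definition backward_asymptotic :: "(int \<Rightarrow> 'e) \<Rightarrow> (int \<Rightarrow> 'e) set \<Rightarrow> bool" where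
  "backward_asymptotic x X \<longleftrightarrow> (\<exists>u\<in>X. \<exists>N::int. \<forall>i\<le>N. x i = u i)"

definition Hprime_verts :: "('v,'e) pre_digraph \<Rightarrow> ('e \<Rightarrow> 'a) \<Rightarrow> 'v set set" where
  "Hprime_verts H L =
     (let K = H2 H L
      in {w. \<exists>C\<in>components K.
               (\<exists>y\<in>sofic H L. backward_asymptotic (beta H L y) (edge_shift (induced_sub K C))) \<and>
               (\<exists>v\<in>C. (v, w) \<in> (edge_rel K)\<^sup>*)})"

definition Hprime :: "('v,'e) pre_digraph \<Rightarrow> ('e \<Rightarrow> 'a)
      \<Rightarrow> ('v set, 'v set \<times> 'a \<times> 'v set) pre_digraph" where
  "Hprime H L =
     (let K = H2 H L; V = Hprime_verts H L
      in K\<lparr> verts := V, arcs := {e\<in>arcs K. tail K e \<in> V} \<rparr>)"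

text \<open>The labeling of H' is the restriction of subset_label to the arcs of H'.\<close>

end

(*
  A point x of the subset shift of (G, L) lists at each time the set of vertices at which a path of G
  spelling the labels of x can sit; it is the point generated by the family of all such paths, its
  lifts. Pushing the lifts forward along phi and reading off their tails gives a point of the subset
  shift of (H, L_H) labelled psi (lab x). As phi and phi^-1 are sliding block codes and the graphs are
  right-resolving, this is again a sliding block code, inverted by the same construction for phi^-1
  and psi^-1. It sends beta_G y to beta_H (psi y), so it preserves the intrinsic description of
  X_{G'} as the points each of whose right halves is reachable from the left half of a beta point,
  and restricts to the required conjugacy.

  Uniqueness comes from rigidity: a label-preserving automorphism theta of X_{H'} is the identity.
  Among points labelled y, beta y has the largest vertex sets; approximating x from the left by a point
  that agrees with some beta y in the far past and propagating vertex-set inclusions forward gives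
  fst (theta x i) <= fst (x i), the same argument for theta^-1 gives equality, and a point of the
  subset shift is determined by its vertex sets and labels.
*)

theory Submission
  imports Defs
begin

section \<open>Sliding block codes\<close>

lemma topspace_seq_top [simp]: "topspace seq_top = UNIV"
  by (simp add: seq_top_def topspace_product_topology)

definition cylinder :: "(int \<Rightarrow> 'a) \<Rightarrow> int set \<Rightarrow> (int \<Rightarrow> 'a) set" where
  "cylinder x J = {x'. \<forall>t\<in>J. x' t = x t}"

lemma self_in_cylinder [simp]: "x \<in> cylinder x J"
  by (simp add: cylinder_def)

lemma continuous_map_seq_top_coordinate: "continuous_map seq_top (discrete_topology UNIV) (\<lambda>x. x t)"
  unfolding seq_top_def by (rule continuous_map_product_projection) simp

lemma openin_cylinder:
  assumes "finite J"
  shows "openin seq_top (cylinder x J)"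
proof (cases "J = {}")
  case True
  then show ?thesis using openin_topspace[of seq_top] by (simp add: cylinder_def)
next
  case False
  have coordinate: "openin seq_top {x'. x' t \<in> {x t}}" for t
    using openin_continuous_map_preimage[OF continuous_map_seq_top_coordinate[of t], of "{x t}"] by simp
  have "openin seq_top (\<Inter>t\<in>J. {x'. x' t \<in> {x t}})"
    by (rule openin_INT2) (use assms False coordinate in auto)
  moreover have "(\<Inter>t\<in>J. {x'. x' t \<in> {x t}}) = cylinder x J"
    by (auto simp: cylinder_def)
  ultimately show ?thesis by simp
qed

lemma openin_seq_top_finite_support:
  assumes "finite J" and "\<And>x x'. x \<in> S \<Longrightarrow> \<forall>t\<in>J. x' t = x t \<Longrightarrow> x' \<in> S"
  shows "openin seq_top S"
  unfolding openin_subopen[of seq_top S]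
proof
  fix x assume "x \<in> S"
  then have "cylinder x J \<subseteq> S"
    using assms(2) by (auto simp: cylinder_def)
  then show "\<exists>T. openin seq_top T \<and> x \<in> T \<and> T \<subseteq> S"
    by (intro exI[of _ "cylinder x J"]) (simp add: openin_cylinder[OF assms(1)])
qed

lemma closedin_seq_top_finite_support:
  assumes "finite J" and "\<And>x x'. x \<in> S \<Longrightarrow> \<forall>t\<in>J. x' t = x t \<Longrightarrow> x' \<in> S"
  shows "closedin seq_top S"
proof -
  have "openin seq_top (- S)"
  proof (rule openin_seq_top_finite_support[OF assms(1)])
    fix x x' assume "x \<in> - S" "\<forall>t\<in>J. x' t = x t"
    then show "x' \<in> - S"
      using assms(2)[of x' x] by auto
  qed
  then show ?thesis by (simp add: closedin_def Compl_eq_Diff_UNIV)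
qed

lemma continuous_map_discrete_if_local_window:
  assumes "\<And>x. x \<in> X \<Longrightarrow> \<exists>J. finite J \<and> (\<forall>x'\<in>X \<inter> cylinder x J. g x' = g x)"
  shows "continuous_map (subtopology seq_top X) (discrete_topology UNIV) g"
  unfolding continuous_map
proof (intro conjI allI impI)
  fix U :: "'b set"
  show "openin (subtopology seq_top X) {x \<in> topspace (subtopology seq_top X). g x \<in> U}"
    unfolding openin_subopen[of _ "{x \<in> _. g x \<in> U}"]
  proof
    fix x assume "x \<in> {x \<in> topspace (subtopology seq_top X). g x \<in> U}"
    then have x: "x \<in> X" "g x \<in> U" by auto
    then obtain J where "finite J" and J: "\<forall>x'\<in>X \<inter> cylinder x J. g x' = g x"
      using assms by blast
    have "openin (subtopology seq_top X) (X \<inter> cylinder x J)"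
      using \<open>finite J\<close> by (simp add: openin_cylinder openin_subtopology_Int2)
    moreover have "X \<inter> cylinder x J \<subseteq> {x \<in> topspace (subtopology seq_top X). g x \<in> U}"
    proof
      fix z assume z: "z \<in> X \<inter> cylinder x J"
      then have "g z = g x"
        using J by blast
      then show "z \<in> {x \<in> topspace (subtopology seq_top X). g x \<in> U}"
        using z x by simp
    qed
    moreover have "x \<in> X \<inter> cylinder x J"
      using x by simp
    ultimately show "\<exists>T. openin (subtopology seq_top X) T \<and> x \<in> T \<and>
        T \<subseteq> {x \<in> topspace (subtopology seq_top X). g x \<in> U}"
      by blast
  qed
qed auto

lemma local_window_if_continuous_map_discrete:
  assumes "continuous_map (subtopology seq_top X) (discrete_topology UNIV) g" and "x \<in> X"
  shows "\<exists>J. finite J \<and> (\<forall>x'\<in>X \<inter> cylinder x J. g x' = g x)"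
proof -
  have "openin (subtopology seq_top X) {x' \<in> topspace (subtopology seq_top X). g x' \<in> {g x}}"
    using assms(1) by (rule openin_continuous_map_preimage) simp
  then obtain T where T: "openin seq_top T" "{x' \<in> X. g x' = g x} = T \<inter> X"
    by (auto simp: openin_subtopology)
  have "x \<in> T" using T(2) assms(2) by blast
  then obtain U where U: "finite {i \<in> UNIV. U i \<noteq> topspace (discrete_topology UNIV)}"
    "x \<in> Pi\<^sub>E UNIV U" "Pi\<^sub>E UNIV U \<subseteq> T"
    using T(1) unfolding seq_top_def openin_product_topology_alt by blast
  have "g x' = g x" if "x' \<in> X" "x' \<in> cylinder x {i. U i \<noteq> UNIV}" for x'
  proof -
    have "x' i \<in> U i" for i
    proof (cases "U i = UNIV")
      case False
      then have "x' i = x i"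
        using that(2) by (simp add: cylinder_def)
      then show ?thesis
        using U(2) by (simp add: PiE_iff)
    qed simp
    then have "x' \<in> T"
      using U(3) by (auto simp: PiE_iff)
    then have "x' \<in> {x' \<in> X. g x' = g x}"
      unfolding T(2) using that(1) by blast
    then show ?thesis by simp
  qed
  then have "\<forall>x'\<in>X \<inter> cylinder x {i. U i \<noteq> UNIV}. g x' = g x"
    by blast
  moreover have "finite {i. U i \<noteq> UNIV}"
    using U(1) by simp
  ultimately show ?thesis
    by (intro exI[of _ "{i. U i \<noteq> UNIV}"]) simp
qed

lemma uniform_window_if_continuous_map_discrete:
  assumes "compactin seq_top X"
    and "continuous_map (subtopology seq_top X) (discrete_topology UNIV) g"
  shows "\<exists>J. finite J \<and> (\<forall>x\<in>X. \<forall>x'\<in>X \<inter> cylinder x J. g x' = g x)"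
proof -
  have "\<forall>x\<in>X. \<exists>J. finite J \<and> (\<forall>x'\<in>X \<inter> cylinder x J. g x' = g x)"
    using local_window_if_continuous_map_discrete[OF assms(2)] by blast
  from bchoice[OF this]
  obtain W where W: "\<forall>x\<in>X. finite (W x) \<and> (\<forall>x'\<in>X \<inter> cylinder x (W x). g x' = g x)"
    by blast
  then have finite_W: "\<forall>x\<in>X. finite (W x)"
    by blast
  have "\<exists>\<F>. finite \<F> \<and> \<F> \<subseteq> (\<lambda>x. cylinder x (W x)) ` X \<and> X \<subseteq> \<Union>\<F>"
  proof (rule compactinD[OF assms(1)])
    show "openin seq_top U" if "U \<in> (\<lambda>x. cylinder x (W x)) ` X" for U
      using that finite_W openin_cylinder by blast
    show "X \<subseteq> \<Union> ((\<lambda>x. cylinder x (W x)) ` X)"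
      using self_in_cylinder by blast
  qed
  then obtain \<F> where \<F>: "finite \<F>" "\<F> \<subseteq> (\<lambda>x. cylinder x (W x)) ` X" "X \<subseteq> \<Union>\<F>"
    by blast
  obtain X0 where X0: "X0 \<subseteq> X" "finite X0" "\<F> = (\<lambda>x. cylinder x (W x)) ` X0"
    using finite_subset_image[OF \<F>(1,2)] by blast
  define J where "J = (\<Union>x0\<in>X0. W x0)"
  have "g x' = g x" if "x \<in> X" "x' \<in> X \<inter> cylinder x J" for x x'
  proof -
    obtain x0 where x0: "x0 \<in> X0" "x \<in> cylinder x0 (W x0)"
      using X0(3) \<F>(3) \<open>x \<in> X\<close> by blast
    have "\<forall>z\<in>X \<inter> cylinder x0 (W x0). g z = g x0"
      using W x0(1) X0(1) by blast
    moreover have "x' \<in> cylinder x0 (W x0)"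
      using that(2) x0 by (auto simp: J_def cylinder_def)
    then have "x' \<in> X \<inter> cylinder x0 (W x0)" "x \<in> X \<inter> cylinder x0 (W x0)"
      using that x0(2) by auto
    ultimately have "g x' = g x0" "g x = g x0"
      by blast+
    then show ?thesis by simp
  qed
  moreover have "finite J"
    using X0(1,2) finite_W by (auto simp: J_def)
  ultimately show ?thesis by blast
qed

definition shift_by :: "int \<Rightarrow> (int \<Rightarrow> 'a) \<Rightarrow> (int \<Rightarrow> 'a)" where
  "shift_by p x = (\<lambda>t. x (t + p))"

lemma shift_by_apply: "shift_by p x t = x (t + p)"
  by (simp add: shift_by_def)

lemma shift_by_0 [simp]: "shift_by 0 x = x"
  by (simp add: shift_by_def)

lemma shift_by_shift_by [simp]: "shift_by p (shift_by q x) = shift_by (p + q) x"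
  by (simp add: shift_by_def algebra_simps)

lemma shift_eq_shift_by_1: "shift = shift_by 1"
  by (simp add: fun_eq_iff shift_def shift_by_apply)

definition shift_invariant :: "(int \<Rightarrow> 'a) set \<Rightarrow> bool" where
  "shift_invariant X \<longleftrightarrow> (\<forall>x\<in>X. \<forall>p. shift_by p x \<in> X)"

lemma shift_by_commute:
  assumes X: "shift_invariant X" and f: "\<forall>x\<in>X. f (shift x) = shift (f x)" and "x \<in> X"
  shows "f (shift_by p x) = shift_by p (f x)"
proof (induction p rule: int_induct[where k = 0])
  case base
  then show ?case by simp
next
  case (step1 p)
  have "shift_by p x \<in> X"
    using X \<open>x \<in> X\<close> by (simp add: shift_invariant_def)
  have "f (shift_by (p + 1) x) = f (shift (shift_by p x))"
    by (simp add: shift_eq_shift_by_1 add.commute)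
  also have "\<dots> = shift (f (shift_by p x))"
    using f \<open>shift_by p x \<in> X\<close> by blast
  also have "\<dots> = shift (shift_by p (f x))"
    by (simp only: step1.IH)
  also have "\<dots> = shift_by (p + 1) (f x)"
    by (simp add: shift_eq_shift_by_1 add.commute)
  finally show ?case .
next
  case (step2 p)
  have "shift_by (p - 1) x \<in> X"
    using X \<open>x \<in> X\<close> by (simp add: shift_invariant_def)
  have "f (shift_by (p - 1) x) = shift_by (-1) (shift (f (shift_by (p - 1) x)))"
    by (simp add: shift_eq_shift_by_1)
  also have "\<dots> = shift_by (-1) (f (shift (shift_by (p - 1) x)))"
    using f \<open>shift_by (p - 1) x \<in> X\<close> by simp
  also have "\<dots> = shift_by (-1) (shift_by p (f x))"
    using step2.IH by (simp add: shift_eq_shift_by_1)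
  also have "\<dots> = shift_by (p - 1) (f x)"
    by simp
  finally show ?case .
qed

definition sliding_block :: "(int \<Rightarrow> 'a) set \<Rightarrow> ((int \<Rightarrow> 'a) \<Rightarrow> (int \<Rightarrow> 'b)) \<Rightarrow> nat \<Rightarrow> bool" where
  "sliding_block X f m \<longleftrightarrow>
     (\<forall>x\<in>X. \<forall>x'\<in>X. \<forall>i. (\<forall>t\<in>{i - int m..i + int m}. x t = x' t) \<longrightarrow> f x i = f x' i)"

lemma sliding_block_subset:
  assumes "sliding_block X f m" and "Y \<subseteq> X"
  shows "sliding_block Y f m"
  using assms unfolding sliding_block_def by blast

lemma continuous_map_seq_top_iff:
  "continuous_map Z seq_top f \<longleftrightarrow> (\<forall>i. continuous_map Z (discrete_topology UNIV) (\<lambda>x. f x i))"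
  by (simp add: seq_top_def continuous_map_componentwise_UNIV)

lemma sliding_block_continuous_map:
  assumes "sliding_block X f m"
  shows "continuous_map (subtopology seq_top X) seq_top f"
  unfolding continuous_map_seq_top_iff
proof
  fix i
  show "continuous_map (subtopology seq_top X) (discrete_topology UNIV) (\<lambda>x. f x i)"
  proof (rule continuous_map_discrete_if_local_window)
    fix x assume "x \<in> X"
    then have "\<forall>x'\<in>X \<inter> cylinder x {i - int m..i + int m}. f x' i = f x i"
      using assms unfolding sliding_block_def cylinder_def by blast
    then show "\<exists>J. finite J \<and> (\<forall>x'\<in>X \<inter> cylinder x J. f x' i = f x i)"
      by (intro exI[of _ "{i - int m..i + int m}"]) simp
  qed
qed

theorem sliding_block_if_continuous_shift_commuting:
  assumes "compactin seq_top X" and "shift_invariant X"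
    and "continuous_map (subtopology seq_top X) seq_top f"
    and "\<forall>x\<in>X. f (shift x) = shift (f x)"
  shows "\<exists>m. sliding_block X f m"
proof -
  have "continuous_map (subtopology seq_top X) (discrete_topology UNIV) (\<lambda>x. f x 0)"
    using continuous_map_compose[OF assms(3) continuous_map_seq_top_coordinate] by (simp add: o_def)
  then obtain J where "finite J" and J: "\<forall>x\<in>X. \<forall>x'\<in>X \<inter> cylinder x J. f x' 0 = f x 0"
    using uniform_window_if_continuous_map_discrete[OF assms(1)] by blast
  define M where "M = Max (insert 0 (abs ` J))"
  have "0 \<le> M" and M: "\<forall>t\<in>J. \<bar>t\<bar> \<le> M"
    using \<open>finite J\<close> by (simp_all add: M_def)
  define m where "m = nat M"
  have "f x i = f x' i"
    if x: "x \<in> X" "x' \<in> X" and agree: "\<forall>t\<in>{i - int m..i + int m}. x t = x' t" for x x' i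
  proof -
    have shifted: "shift_by i x \<in> X" "shift_by i x' \<in> X"
      using assms(2) x by (simp_all add: shift_invariant_def)
    have "x' (t + i) = x (t + i)" if "t \<in> J" for t
    proof -
      have "t + i \<in> {i - int m..i + int m}"
        using M \<open>0 \<le> M\<close> that by (auto simp: m_def abs_le_iff)
      then show ?thesis
        using agree by simp
    qed
    then have "shift_by i x' \<in> X \<inter> cylinder (shift_by i x) J"
      using shifted by (simp add: cylinder_def shift_by_apply)
    then have "f (shift_by i x') 0 = f (shift_by i x) 0"
      using J shifted(1) by blast
    moreover have "f (shift_by i z) 0 = f z i" if "z \<in> X" for z
    proof -
      have "f (shift_by i z) 0 = shift_by i (f z) 0"
        using shift_by_commute[OF assms(2,4) that] by simp
      then show ?thesis
        by (simp add: shift_by_apply)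
    qed
    ultimately show ?thesis
      using x by simp
  qed
  then show ?thesis
    unfolding sliding_block_def by blast
qed

lemma conjugacy_bij_betw:
  assumes "conjugacy X Y f"
  shows "bij_betw f X Y"
proof -
  have h: "homeomorphic_map (subtopology seq_top X) (subtopology seq_top Y) f"
    using assms by (simp add: conjugacy_def)
  show ?thesis
    using homeomorphic_imp_surjective_map[OF h] homeomorphic_imp_injective_map[OF h]
    by (simp add: bij_betw_def)
qed

lemma conjugacy_continuous_map:
  assumes "conjugacy X Y f"
  shows "continuous_map (subtopology seq_top X) seq_top f"
proof -
  have "continuous_map (subtopology seq_top X) (subtopology seq_top Y) f"
    using assms homeomorphic_imp_continuous_map unfolding conjugacy_def by blast
  then show ?thesis
    by (rule continuous_map_into_fulltopology)
qed

corollary conjugacy_sliding_block: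
  assumes "compactin seq_top X" and "shift_invariant X" and "conjugacy X Y f"
  shows "\<exists>m. sliding_block X f m"
  using sliding_block_if_continuous_shift_commuting[OF assms(1,2) conjugacy_continuous_map[OF assms(3)]]
    assms(3) by (simp add: conjugacy_def)

lemma conjugacy_compose:
  assumes f: "conjugacy X Y f" and g: "conjugacy Y Z g"
  shows "conjugacy X Z (g \<circ> f)"
proof -
  have "(g \<circ> f) (shift x) = shift ((g \<circ> f) x)" if "x \<in> X" for x
  proof -
    have "f x \<in> Y"
      using bij_betw_apply[OF conjugacy_bij_betw[OF f] that] .
    then show ?thesis
      using f g that by (simp add: conjugacy_def)
  qed
  moreover have "homeomorphic_map (subtopology seq_top X) (subtopology seq_top Z) (g \<circ> f)"
    using f g unfolding conjugacy_def by (blast intro: homeomorphic_map_compose)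
  ultimately show ?thesis
    by (simp add: conjugacy_def)
qed

lemma conjugacy_inv_into:
  assumes f: "conjugacy X Y f" and X: "shift_invariant X"
  shows "conjugacy Y X (inv_into X f)"
proof -
  have bij: "bij_betw f X Y" by (rule conjugacy_bij_betw[OF f])
  obtain g where g: "homeomorphic_maps (subtopology seq_top X) (subtopology seq_top Y) f g"
    using f homeomorphic_map_maps unfolding conjugacy_def by blast
  have "g y = inv_into X f y" if "y \<in> Y" for y
  proof -
    have "g y \<in> X" "f (g y) = y"
      using g that continuous_map_image_subset_topspace[of "subtopology seq_top Y" "subtopology seq_top X" g]
      by (auto simp: homeomorphic_maps_def)
    then show ?thesis
      using inv_into_f_f[OF bij_betw_imp_inj_on[OF bij] \<open>g y \<in> X\<close>] by simp
  qed
  then have "homeomorphic_maps (subtopology seq_top X) (subtopology seq_top Y) f (inv_into X f)"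
    using homeomorphic_maps_eq[OF g] by simp
  then have "homeomorphic_map (subtopology seq_top Y) (subtopology seq_top X) (inv_into X f)"
    using homeomorphic_maps_map by blast
  moreover have "inv_into X f (shift y) = shift (inv_into X f y)" if "y \<in> Y" for y
  proof -
    have "inv_into X f y \<in> X" using bij that by (simp add: bij_betw_def inv_into_into)
    moreover have "shift (inv_into X f y) \<in> X"
      using X calculation by (simp add: shift_invariant_def shift_eq_shift_by_1)
    moreover have "f (shift (inv_into X f y)) = shift y"
      using f calculation(1) bij_betw_inv_into_right[OF bij that] by (simp add: conjugacy_def)
    ultimately show ?thesis
      using bij_betw_inv_into_left[OF bij, of "shift (inv_into X f y)"] by simp
  qed
  ultimately show ?thesis
    unfolding conjugacy_def by blast
qed

section \<open>Subset shifts and lifts\<close>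

lemma label_map_apply: "label_map L x i = L (x i)"
  by (simp add: label_map_def)

lemma subset_label_apply [simp]: "subset_label (F, a, F') = a"
  by (simp add: subset_label_def)

lemma edge_shiftD:
  assumes "x \<in> edge_shift K"
  shows "x i \<in> arcs K" "head K (x i) = tail K (x (i + 1))"
  using assms by (simp_all add: edge_shift_def)

lemma shift_invariant_edge_shift: "shift_invariant (edge_shift K)"
  by (simp add: shift_invariant_def edge_shift_def shift_by_apply algebra_simps)

lemma label_map_shift_by: "label_map L (shift_by p x) = shift_by p (label_map L x)"
  by (simp add: fun_eq_iff shift_by_apply label_map_apply)

lemma shift_invariant_sofic: "shift_invariant (sofic G L)"
  using shift_invariant_edge_shift[of G]
  by (auto simp: shift_invariant_def sofic_def label_map_shift_by[symmetric])

lemma compactin_edge_shift: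
  assumes "finite (arcs K)"
  shows "compactin seq_top (edge_shift K)"
proof (rule closed_compactin)
  show "compactin seq_top (Pi\<^sub>E UNIV (\<lambda>_. arcs K))"
    unfolding seq_top_def compactin_PiE using assms by (simp add: finite_imp_compactin)
  show "edge_shift K \<subseteq> Pi\<^sub>E UNIV (\<lambda>_. arcs K)"
    by (auto simp: edge_shift_def)
  have "closedin seq_top {x. x i \<in> arcs K \<and> head K (x i) = tail K (x (i + 1))}" for i
    by (rule closedin_seq_top_finite_support[of "{i, i + 1}"]) auto
  then have "closedin seq_top (\<Inter>i. {x. x i \<in> arcs K \<and> head K (x i) = tail K (x (i + 1))})"
    by (intro closedin_INT) auto
  moreover have "(\<Inter>i. {x. x i \<in> arcs K \<and> head K (x i) = tail K (x (i + 1))}) = edge_shift K"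
    by (auto simp: edge_shift_def)
  ultimately show "closedin seq_top (edge_shift K)"
    by simp
qed

lemma right_resolving_paths_agree:
  assumes rr: "right_resolving G L" and k: "k \<in> edge_shift G" "k' \<in> edge_shift G"
    and tails: "tail G (k a) = tail G (k' a)"
    and labels: "\<forall>s\<in>{a..b}. L (k s) = L (k' s)"
    and t: "t \<in> {a..b}"
  shows "k t = k' t"
proof -
  have "a \<le> t" using t by simp
  then show ?thesis
    using t
  proof (induction t rule: int_ge_induct)
    case base
    then show ?case
      using rr tails labels edge_shiftD[OF k(1)] edge_shiftD[OF k(2)]
      unfolding right_resolving_def by force
  next
    case (step s)
    then have "k s = k' s" by simp
    then have "tail G (k (s + 1)) = tail G (k' (s + 1))"
      using edge_shiftD(2)[OF k(1)] edge_shiftD(2)[OF k(2)] by metis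
    moreover have "L (k (s + 1)) = L (k' (s + 1))"
      using labels step.prems by simp
    ultimately show ?case
      using rr edge_shiftD(1)[OF k(1)] edge_shiftD(1)[OF k(2)]
      unfolding right_resolving_def by blast
  qed
qed

lemma forward_chain:
  assumes fwd: "\<And>j a. a \<in> A j \<Longrightarrow> \<exists>b\<in>A (j + 1). R a b" and "a0 \<in> A (i :: int)"
  shows "\<exists>f. f 0 = a0 \<and> (\<forall>n. f n \<in> A (i + int n) \<and> R (f n) (f (Suc n)))"
proof -
  define nxt where "nxt j a = (SOME b. b \<in> A (j + 1) \<and> R a b)" for j a
  have nxt: "nxt j a \<in> A (j + 1) \<and> R a (nxt j a)" if "a \<in> A j" for j a
    unfolding nxt_def by (rule someI_ex) (use fwd[OF that] in blast)
  define f where "f = rec_nat a0 (\<lambda>n a. nxt (i + int n) a)"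
  have f: "f n \<in> A (i + int n)" for n
  proof (induction n)
    case (Suc n)
    show ?case
      using nxt[OF Suc.IH] by (simp add: f_def ac_simps)
  qed (use \<open>a0 \<in> A i\<close> in \<open>simp add: f_def\<close>)
  then have "R (f n) (f (Suc n))" for n
    using nxt by (simp add: f_def)
  moreover have "f 0 = a0"
    by (simp add: f_def)
  ultimately show ?thesis
    using f by blast
qed

lemma bi_infinite_chain:
  assumes fwd: "\<And>j a. a \<in> A j \<Longrightarrow> \<exists>b\<in>A (j + 1). R a b"
    and bwd: "\<And>j b. b \<in> A (j + 1) \<Longrightarrow> \<exists>a\<in>A j. R a b"
    and "a0 \<in> A (i :: int)"
  shows "\<exists>k. k i = a0 \<and> (\<forall>j. k j \<in> A j \<and> R (k j) (k (j + 1)))"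
proof -
  obtain fw where fw: "fw 0 = a0" "\<And>n. fw n \<in> A (i + int n) \<and> R (fw n) (fw (Suc n))"
    using forward_chain[where A = A and R = R, OF fwd \<open>a0 \<in> A i\<close>] by blast
  have "\<exists>b\<in>A (- (j + 1)). R b a" if "a \<in> A (- j)" for j a
    using bwd[of a "- j - 1"] that by simp
  then obtain bw where bw: "bw 0 = a0" "\<And>n. bw n \<in> A (- (- i + int n)) \<and> R (bw (Suc n)) (bw n)"
    using forward_chain[of "\<lambda>j. A (- j)" "\<lambda>a b. R b a" a0 "- i"] \<open>a0 \<in> A i\<close> by auto
  define k where "k j = (if i \<le> j then fw (nat (j - i)) else bw (nat (i - j)))" for j
  have "k j \<in> A j \<and> R (k j) (k (j + 1))" for j
  proof (cases "i \<le> j")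
    case True
    then obtain n where "j = i + int n"
      using zle_iff_zadd by blast
    then have "k j = fw n" "k (j + 1) = fw (Suc n)" "A j = A (i + int n)"
      by (simp_all add: k_def nat_add_distrib)
    then show ?thesis
      using fw(2)[of n] by simp
  next
    case False
    define n where "n = nat (i - j - 1)"
    have n: "j = i - int (Suc n)"
      using False by (simp add: n_def)
    have "k (j + 1) = bw n"
      using n fw(1) bw(1) by (cases n) (simp_all add: k_def nat_add_distrib)
    moreover have "k j = bw (Suc n)" "A j = A (- (- i + int (Suc n)))"
      using n by (simp_all add: k_def nat_add_distrib)
    ultimately show ?thesis
      using bw(2)[of "Suc n"] bw(2)[of n] by simp
  qed
  moreover have "k i = a0"
    by (simp add: k_def fw(1))
  ultimately show ?thesis by blast
qed

abbreviation subset_shift :: "('v,'e) pre_digraph \<Rightarrow> ('e \<Rightarrow> 'a) \<Rightarrow> (int \<Rightarrow> 'v set \<times> 'a \<times> 'v set) set" where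
  "subset_shift G L \<equiv> edge_shift (subset_graph G L)"

abbreviation lab :: "(int \<Rightarrow> 'v set \<times> 'a \<times> 'v set) \<Rightarrow> int \<Rightarrow> 'a" where
  "lab x \<equiv> label_map subset_label x"

lemma subset_shiftD:
  assumes "x \<in> subset_shift G L"
  shows "fst (x i) \<noteq> {}" "fst (x i) \<subseteq> verts G"
    "fst (x i) \<subseteq> {tail G e |e. e \<in> arcs G \<and> L e = lab x i}"
    "fst (x (i + 1)) = {head G e |e. e \<in> arcs G \<and> tail G e \<in> fst (x i) \<and> L e = lab x i}"
    "x i = (fst (x i), lab x i, fst (x (i + 1)))"
proof -
  obtain F a F' where xi: "x i = (F, a, F')"
    by (cases "x i") auto
  have "(F, a, F') \<in> arcs (subset_graph G L)"
    using edge_shiftD(1)[OF assms, of i] xi by simp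
  moreover have "F' = fst (x (i + 1))"
    using edge_shiftD(2)[OF assms, of i] xi by (simp add: subset_graph_def)
  ultimately show "fst (x i) \<noteq> {}" "fst (x i) \<subseteq> verts G"
    "fst (x i) \<subseteq> {tail G e |e. e \<in> arcs G \<and> L e = lab x i}"
    "fst (x (i + 1)) = {head G e |e. e \<in> arcs G \<and> tail G e \<in> fst (x i) \<and> L e = lab x i}"
    "x i = (fst (x i), lab x i, fst (x (i + 1)))"
    using xi by (simp_all add: subset_graph_def label_map_apply)
qed

definition lifts :: "('v,'e) pre_digraph \<Rightarrow> ('e \<Rightarrow> 'a) \<Rightarrow> (int \<Rightarrow> 'v set \<times> 'a \<times> 'v set)
      \<Rightarrow> (int \<Rightarrow> 'e) set" where
  "lifts G L x = {k \<in> edge_shift G. label_map L k = lab x \<and> (\<forall>j. tail G (k j) \<in> fst (x j))}"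

lemma lifts_through_vertex:
  assumes x: "x \<in> subset_shift G L" and v: "v \<in> fst (x i)"
  shows "\<exists>k\<in>lifts G L x. tail G (k i) = v"
proof -
  define A where "A j = {e \<in> arcs G. tail G e \<in> fst (x j) \<and> L e = lab x j}" for j
  have fwd: "\<exists>e'\<in>A (j + 1). head G e = tail G e'" if "e \<in> A j" for j e
  proof -
    have "e \<in> arcs G \<and> tail G e \<in> fst (x j) \<and> L e = lab x j"
      using that by (simp add: A_def)
    then have "head G e \<in> fst (x (j + 1))"
      unfolding subset_shiftD(4)[OF x, of j] by blast
    moreover have "head G e \<in> {tail G e |e. e \<in> arcs G \<and> L e = lab x (j + 1)}"
      using subset_shiftD(3)[OF x, of "j + 1"] calculation by (rule subsetD)
    then obtain e' where "head G e = tail G e'" "e' \<in> arcs G" "L e' = lab x (j + 1)"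
      by blast
    ultimately have "e' \<in> A (j + 1)"
      unfolding A_def by simp
    then show ?thesis
      using \<open>head G e = tail G e'\<close> by blast
  qed
  have bwd: "\<exists>e\<in>A j. head G e = tail G e'" if "e' \<in> A (j + 1)" for j e'
  proof -
    have "tail G e' \<in> fst (x (j + 1))"
      using that by (simp add: A_def)
    then obtain e where "tail G e' = head G e" "e \<in> arcs G" "tail G e \<in> fst (x j)" "L e = lab x j"
      unfolding subset_shiftD(4)[OF x, of j] by blast
    then have "e \<in> A j"
      unfolding A_def by simp
    then show ?thesis
      using \<open>tail G e' = head G e\<close> by force
  qed
  obtain e0 where "e0 \<in> arcs G" "L e0 = lab x i" "tail G e0 = v"
    using v subset_shiftD(3)[OF x, of i] by blast
  then have "e0 \<in> A i"
    using v unfolding A_def by simp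
  with bi_infinite_chain[of A "\<lambda>e e'. head G e = tail G e'", OF fwd bwd]
  obtain k where k: "k i = e0" "\<forall>j. k j \<in> A j \<and> head G (k j) = tail G (k (j + 1))"
    by blast
  then have "k \<in> lifts G L x"
    by (simp add: lifts_def edge_shift_def A_def fun_eq_iff label_map_apply)
  then show ?thesis
    using k(1) \<open>tail G e0 = v\<close> by blast
qed

lemma lifts_edge_shift: "k \<in> lifts G L x \<Longrightarrow> k \<in> edge_shift G"
  and lifts_label: "k \<in> lifts G L x \<Longrightarrow> label_map L k = lab x"
  and lifts_tail: "k \<in> lifts G L x \<Longrightarrow> tail G (k j) \<in> fst (x j)"
  by (simp_all add: lifts_def)

lemma tails_lifts:
  assumes "x \<in> subset_shift G L"
  shows "(\<lambda>k. tail G (k j)) ` lifts G L x = fst (x j)"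
  using lifts_through_vertex[OF assms] lifts_tail by blast

lemma lifts_nonempty:
  assumes "x \<in> subset_shift G L"
  shows "lifts G L x \<noteq> {}"
  using tails_lifts[OF assms, of 0] subset_shiftD(1)[OF assms, of 0] by auto

lemma lab_in_sofic:
  assumes "x \<in> subset_shift G L"
  shows "lab x \<in> sofic G L"
proof -
  obtain k where "k \<in> lifts G L x"
    using lifts_nonempty[OF assms] by blast
  then show ?thesis
    unfolding sofic_def using lifts_edge_shift lifts_label by (metis image_eqI)
qed

definition subset_point :: "('v,'e) pre_digraph \<Rightarrow> (int \<Rightarrow> 'e) set \<Rightarrow> (int \<Rightarrow> 'a)
      \<Rightarrow> (int \<Rightarrow> 'v set \<times> 'a \<times> 'v set)" where
  "subset_point G S y = (\<lambda>j. ((\<lambda>k. tail G (k j)) ` S, y j, (\<lambda>k. tail G (k (j + 1))) ` S))"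

lemma lab_subset_point [simp]: "lab (subset_point G S y) = y"
  by (simp add: subset_point_def fun_eq_iff label_map_apply)

lemma fst_subset_point [simp]: "fst (subset_point G S y j) = (\<lambda>k. tail G (k j)) ` S"
  by (simp add: subset_point_def)

lemma subset_point_in_subset_shift:
  assumes G: "graph_ok G" and rr: "right_resolving G L"
    and S: "S \<subseteq> edge_shift G" "S \<noteq> {}" and labels: "\<And>k. k \<in> S \<Longrightarrow> label_map L k = y"
  shows "subset_point G S y \<in> subset_shift G L"
  unfolding edge_shift_def
proof (intro CollectI allI conjI)
  fix i
  define F where "F j = (\<lambda>k. tail G (k j)) ` S" for j
  have arcs: "k j \<in> arcs G" "head G (k j) = tail G (k (j + 1))" "L (k j) = y j" if "k \<in> S" for k j
    using edge_shiftD[of k G j] labels[OF that] S(1) that by (auto simp: label_map_def)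
  have "wf_digraph G"
    using G by (simp add: graph_ok_def fin_digraph_def)
  then have verts: "F j \<subseteq> verts G" for j
    using arcs(1) by (auto simp: F_def wf_digraph_def)
  have step: "F (i + 1) = {head G e |e. e \<in> arcs G \<and> tail G e \<in> F i \<and> L e = y i}"
  proof
    show "F (i + 1) \<subseteq> {head G e |e. e \<in> arcs G \<and> tail G e \<in> F i \<and> L e = y i}"
    proof
      fix v assume "v \<in> F (i + 1)"
      then obtain k where k: "k \<in> S" "v = tail G (k (i + 1))"
        by (auto simp: F_def)
      then have "v = head G (k i)" "k i \<in> arcs G" "tail G (k i) \<in> F i" "L (k i) = y i"
        using arcs[OF k(1)] by (auto simp: F_def)
      then show "v \<in> {head G e |e. e \<in> arcs G \<and> tail G e \<in> F i \<and> L e = y i}"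
        by blast
    qed
    show "{head G e |e. e \<in> arcs G \<and> tail G e \<in> F i \<and> L e = y i} \<subseteq> F (i + 1)"
    proof
      fix v assume "v \<in> {head G e |e. e \<in> arcs G \<and> tail G e \<in> F i \<and> L e = y i}"
      then obtain e k where e: "v = head G e" "e \<in> arcs G" "L e = y i" and k: "k \<in> S" "tail G e = tail G (k i)"
        by (auto simp: F_def)
      then have "e = k i"
        using rr arcs[OF k(1)] unfolding right_resolving_def by metis
      then show "v \<in> F (i + 1)"
        using e(1) arcs(2)[OF k(1)] k(1) by (simp add: F_def)
    qed
  qed
  have tails: "F i \<subseteq> {tail G e |e. e \<in> arcs G \<and> L e = y i}"
    using arcs by (auto simp: F_def)
  have nonempty: "F j \<noteq> {}" for j
    using S(2) by (simp add: F_def)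
  have label: "y i \<in> L ` arcs G"
  proof -
    obtain k where "k \<in> S"
      using S(2) by blast
    then show ?thesis
      using arcs(1,3)[of k i] by (metis image_eqI)
  qed
  have "(F i, y i, F (i + 1)) \<in> arcs (subset_graph G L)"
    unfolding subset_graph_def pre_digraph.select_convs mem_Collect_eq case_prod_conv
    using nonempty[of i] nonempty[of "i + 1"] verts[of i] verts[of "i + 1"] label tails step
    by blast
  then show "subset_point G S y i \<in> arcs (subset_graph G L)"
    by (simp add: subset_point_def F_def)
  show "head (subset_graph G L) (subset_point G S y i) = tail (subset_graph G L) (subset_point G S y (i + 1))"
    by (simp add: subset_point_def subset_graph_def)
qed

lemma subset_point_lifts:
  assumes "x \<in> subset_shift G L"
  shows "subset_point G (lifts G L x) (lab x) = x"
proof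
  fix j
  show "subset_point G (lifts G L x) (lab x) j = x j"
    using tails_lifts[OF assms, of j] tails_lifts[OF assms, of "j + 1"] subset_shiftD(5)[OF assms, of j]
    by (simp add: subset_point_def)
qed

lemma beta_eq_subset_point: "beta G L y = subset_point G {k \<in> edge_shift G. label_map L k = y} y"
  by (auto simp: beta_def subset_point_def)

lemma lab_beta [simp]: "lab (beta G L y) = y"
  by (simp add: beta_eq_subset_point)

lemma beta_in_subset_shift:
  assumes "graph_ok G" and "right_resolving G L" and "y \<in> sofic G L"
  shows "beta G L y \<in> subset_shift G L"
  unfolding beta_eq_subset_point
  by (rule subset_point_in_subset_shift) (use assms in \<open>auto simp: sofic_def\<close>)

lemma lifts_beta: "lifts G L (beta G L y) = {k \<in> edge_shift G. label_map L k = y}"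
  by (auto simp: lifts_def beta_eq_subset_point)

lemma beta_shift_by: "beta G L (shift_by p y) = shift_by p (beta G L y)"
proof -
  have "{tail G (k i) |k. k \<in> edge_shift G \<and> label_map L k = shift_by p y} =
        {tail G (k (i + p)) |k. k \<in> edge_shift G \<and> label_map L k = y}" for i
  proof (intro equalityI subsetI)
    fix v assume "v \<in> {tail G (k i) |k. k \<in> edge_shift G \<and> label_map L k = shift_by p y}"
    then obtain k where k: "v = tail G (k i)" "k \<in> edge_shift G" "label_map L k = shift_by p y"
      by blast
    then have "shift_by (- p) k \<in> edge_shift G" "label_map L (shift_by (- p) k) = y"
      using shift_invariant_edge_shift[of G] by (simp_all add: shift_invariant_def label_map_shift_by)
    moreover have "v = tail G (shift_by (- p) k (i + p))"
      using k(1) by (simp add: shift_by_apply)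
    ultimately show "v \<in> {tail G (k (i + p)) |k. k \<in> edge_shift G \<and> label_map L k = y}"
      by blast
  next
    fix v assume "v \<in> {tail G (k (i + p)) |k. k \<in> edge_shift G \<and> label_map L k = y}"
    then obtain k where k: "v = tail G (k (i + p))" "k \<in> edge_shift G" "label_map L k = y"
      by blast
    then have "shift_by p k \<in> edge_shift G" "label_map L (shift_by p k) = shift_by p y"
      using shift_invariant_edge_shift[of G] by (simp_all add: shift_invariant_def label_map_shift_by)
    moreover have "v = tail G (shift_by p k i)"
      using k(1) by (simp add: shift_by_apply)
    ultimately show "v \<in> {tail G (k i) |k. k \<in> edge_shift G \<and> label_map L k = shift_by p y}"
      by blast
  qed
  then show ?thesis
    by (simp add: beta_def fun_eq_iff shift_by_apply ac_simps)
qed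

lemma beta_maximal:
  assumes "w \<in> subset_shift G L"
  shows "fst (w t) \<subseteq> fst (beta G L (lab w) t)"
proof
  fix v assume "v \<in> fst (w t)"
  then obtain k where "k \<in> lifts G L w" "tail G (k t) = v"
    using lifts_through_vertex[OF assms] by blast
  then show "v \<in> fst (beta G L (lab w) t)"
    using lifts_edge_shift lifts_label by (fastforce simp: beta_def)
qed

lemma subset_shift_vertex_mono:
  assumes w: "w \<in> subset_shift G L" "w' \<in> subset_shift G L"
    and labels: "\<And>s. t \<le> s \<Longrightarrow> lab w s = lab w' s"
    and le: "fst (w t) \<subseteq> fst (w' t)" and "t \<le> s"
  shows "fst (w s) \<subseteq> fst (w' s)"
  using \<open>t \<le> s\<close>
proof (induction s rule: int_ge_induct)
  case (step s)
  have "lab w s = lab w' s"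
    using labels step.hyps(1) by blast
  show ?case
    unfolding subset_shiftD(4)[OF w(1), of s] subset_shiftD(4)[OF w(2), of s] \<open>lab w s = lab w' s\<close>
    using step.IH by blast
qed (rule le)

lemma lifts_transfer:
  assumes rr: "right_resolving G L" and x: "x \<in> subset_shift G L" "x' \<in> subset_shift G L"
    and agree: "\<forall>t\<in>{a..b}. x t = x' t" and "a \<le> b" and k: "k \<in> lifts G L x"
  shows "\<exists>k'\<in>lifts G L x'. \<forall>t\<in>{a..b}. k' t = k t"
proof -
  have "tail G (k a) \<in> fst (x' a)"
    using lifts_tail[OF k, of a] agree \<open>a \<le> b\<close> by simp
  then obtain k' where k': "k' \<in> lifts G L x'" "tail G (k' a) = tail G (k a)"
    using lifts_through_vertex[OF x(2)] by blast
  have "L (k' s) = L (k s)" if "s \<in> {a..b}" for s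
  proof -
    have "lab x' s = lab x s"
      using agree that by (simp add: label_map_apply)
    then show ?thesis
      using lifts_label[OF k'(1)] lifts_label[OF k] by (metis label_map_apply)
  qed
  then have "k' t = k t" if "t \<in> {a..b}" for t
    using right_resolving_paths_agree[OF rr lifts_edge_shift[OF k'(1)] lifts_edge_shift[OF k] k'(2)] that
    by blast
  then show ?thesis
    using k'(1) by blast
qed

lemma lifts_shift_by: "lifts G L (shift_by p x) = shift_by p ` lifts G L x"
proof (intro equalityI subsetI)
  fix k assume k: "k \<in> lifts G L (shift_by p x)"
  have "shift_by (- p) k \<in> edge_shift G"
    using lifts_edge_shift[OF k] shift_invariant_edge_shift[of G] by (simp add: shift_invariant_def)
  moreover have "label_map L (shift_by (- p) k) = lab x"
    using lifts_label[OF k] by (simp add: label_map_shift_by)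
  moreover have "tail G (shift_by (- p) k j) \<in> fst (x j)" for j
    using lifts_tail[OF k, of "j - p"] by (simp add: shift_by_apply)
  ultimately have "shift_by (- p) k \<in> lifts G L x"
    by (simp add: lifts_def)
  moreover have "k = shift_by p (shift_by (- p) k)"
    by simp
  ultimately show "k \<in> shift_by p ` lifts G L x"
    by blast
next
  fix k assume "k \<in> shift_by p ` lifts G L x"
  then obtain k0 where k0: "k0 \<in> lifts G L x" "k = shift_by p k0"
    by blast
  then show "k \<in> lifts G L (shift_by p x)"
    using lifts_edge_shift[OF k0(1)] lifts_label[OF k0(1)] lifts_tail[OF k0(1)] shift_invariant_edge_shift[of G]
    by (simp add: lifts_def shift_invariant_def label_map_shift_by shift_by_apply)
qed

lemma subset_point_shift_by:
  "subset_point G (shift_by p ` S) (shift_by p y) = shift_by p (subset_point G S y)"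
  by (simp add: subset_point_def fun_eq_iff shift_by_apply image_image ac_simps)

section \<open>The points of X_{H'}\<close>

lemma trim_step_tail [simp]: "tail (trim_step G) = tail G"
  and trim_step_head [simp]: "head (trim_step G) = head G"
  by (simp_all add: trim_step_def Let_def)

lemma trim_step_subgraph: "verts (trim_step G) \<subseteq> verts G" "arcs (trim_step G) \<subseteq> arcs G"
  by (auto simp: trim_step_def Let_def)

lemma wf_digraph_trim_step: "wf_digraph (trim_step G)"
  by (auto simp: wf_digraph_def trim_step_def Let_def)

lemma edge_shift_trim_step:
  assumes "wf_digraph G"
  shows "edge_shift (trim_step G) = edge_shift G"
proof
  show "edge_shift (trim_step G) \<subseteq> edge_shift G"
    using trim_step_subgraph(2)[of G] by (auto simp: edge_shift_def)
  show "edge_shift G \<subseteq> edge_shift (trim_step G)"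
  proof
    fix x assume x: "x \<in> edge_shift G"
    define V' where "V' = {v \<in> verts G. (\<exists>e\<in>arcs G. tail G e = v) \<and> (\<exists>e\<in>arcs G. head G e = v)}"
    have V': "tail G (x i) \<in> V'" for i
    proof -
      have "head G (x (i - 1)) = tail G (x i)"
        using edge_shiftD(2)[OF x, of "i - 1"] by simp
      then show ?thesis
        using edge_shiftD(1)[OF x, of i] edge_shiftD(1)[OF x, of "i - 1"] assms
        unfolding V'_def wf_digraph_def by blast
    qed
    have "x i \<in> arcs (trim_step G)" for i
      using V'[of i] V'[of "i + 1"] edge_shiftD[OF x, of i]
      by (simp add: trim_step_def Let_def V'_def[symmetric])
    then show "x \<in> edge_shift (trim_step G)"
      using edge_shiftD(2)[OF x] by (simp add: edge_shift_def)
  qed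
qed

lemma trim_step_funpow:
  assumes "wf_digraph G"
  shows "tail ((trim_step ^^ n) G) = tail G \<and> head ((trim_step ^^ n) G) = head G \<and>
    verts ((trim_step ^^ n) G) \<subseteq> verts G \<and> arcs ((trim_step ^^ n) G) \<subseteq> arcs G \<and>
    wf_digraph ((trim_step ^^ n) G) \<and> edge_shift ((trim_step ^^ n) G) = edge_shift G"
proof (induction n)
  case (Suc n)
  then show ?case
    using trim_step_subgraph[of "(trim_step ^^ n) G"] wf_digraph_trim_step
      edge_shift_trim_step[of "(trim_step ^^ n) G"] by auto
qed (use assms in simp)

lemma trim:
  assumes "wf_digraph G"
  shows "tail (trim G) = tail G" "head (trim G) = head G"
    "verts (trim G) \<subseteq> verts G" "arcs (trim G) \<subseteq> arcs G"
    "wf_digraph (trim G)" "edge_shift (trim G) = edge_shift G"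
  unfolding trim_def Let_def using trim_step_funpow[OF assms] by blast+

lemma wf_digraph_subset_graph: "wf_digraph (subset_graph G L)"
  by (auto simp: wf_digraph_def subset_graph_def)

lemma H2_tail [simp]: "tail (H2 G L) = fst"
  and H2_head [simp]: "head (H2 G L) = (\<lambda>p. snd (snd p))"
  and H2_verts: "verts (H2 G L) \<subseteq> verts (subset_graph G L)"
  and wf_digraph_H2: "wf_digraph (H2 G L)"
  and edge_shift_H2: "edge_shift (H2 G L) = subset_shift G L"
  using trim[OF wf_digraph_subset_graph, of G L] by (simp_all add: H2_def subset_graph_def)

lemma finite_verts_H2:
  assumes "graph_ok G"
  shows "finite (verts (H2 G L))"
proof -
  have "verts (H2 G L) \<subseteq> Pow (verts G)"
    using H2_verts[of G L] by (auto simp: subset_graph_def)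
  moreover have "finite (verts G)"
    using assms by (simp add: graph_ok_def fin_digraph_def fin_digraph_axioms_def)
  ultimately show ?thesis
    by (simp add: finite_subset)
qed

lemma finite_arcs_Hprime:
  assumes "graph_ok G"
  shows "finite (arcs (Hprime G L))"
proof -
  have fin: "finite (verts G)" "finite (arcs G)"
    using assms by (simp_all add: graph_ok_def fin_digraph_def fin_digraph_axioms_def)
  have "arcs (Hprime G L) \<subseteq> arcs (H2 G L)"
    by (auto simp: Hprime_def Let_def)
  also have "\<dots> \<subseteq> arcs (subset_graph G L)"
    using trim[OF wf_digraph_subset_graph, of G L] by (simp add: H2_def)
  also have "\<dots> \<subseteq> Pow (verts G) \<times> L ` arcs G \<times> Pow (verts G)"
    by (auto simp: subset_graph_def)
  finally show ?thesis
    by (rule finite_subset) (use fin in simp)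
qed

lemma edge_shift_Hprime:
  "edge_shift (Hprime G L) = {x \<in> subset_shift G L. \<forall>i. fst (x i) \<in> Hprime_verts G L}"
  unfolding edge_shift_H2[symmetric]
  by (auto simp: edge_shift_def Hprime_def Let_def)

lemma edge_shift_Hprime_subset: "edge_shift (Hprime G L) \<subseteq> subset_shift G L"
  by (simp add: edge_shift_Hprime)

lemma edge_shift_edge_rel:
  assumes "z \<in> edge_shift K"
  shows "(tail K (z i), tail K (z (i + 1))) \<in> edge_rel K"
  using edge_shiftD[OF assms, of i] unfolding edge_rel_def by force

lemma edge_shift_rtrancl:
  assumes "z \<in> edge_shift K" and "i \<le> j"
  shows "(tail K (z i), tail K (z j)) \<in> (edge_rel K)\<^sup>*"
  using \<open>i \<le> j\<close>
proof (induction j rule: int_ge_induct)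
  case (step j)
  then show ?case
    using edge_shift_edge_rel[OF assms(1), of j] by (blast intro: rtrancl_into_rtrancl)
qed simp

lemma edge_shift_trancl:
  assumes "z \<in> edge_shift K" and "i < j"
  shows "(tail K (z i), tail K (z j)) \<in> (edge_rel K)\<^sup>+"
  using edge_shift_edge_rel[OF assms(1), of i] edge_shift_rtrancl[OF assms(1), of "i + 1" j] assms(2)
  by (simp add: rtrancl_into_trancl2)

lemma edge_shift_induced_sub_iff:
  "u \<in> edge_shift (induced_sub K C) \<longleftrightarrow> u \<in> edge_shift K \<and> (\<forall>i. tail K (u i) \<in> C)"
  by (auto simp: edge_shift_def induced_sub_def)

definition repeat_loop :: "(int \<Rightarrow> 'e) \<Rightarrow> int \<Rightarrow> int \<Rightarrow> int \<Rightarrow> 'e" where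
  "repeat_loop z i0 N t = (if t < i0 then z t else z (i0 + (t - i0) mod (N - i0)))"

lemma repeat_loop_agrees: "t < N \<Longrightarrow> repeat_loop z i0 N t = z t"
  by (simp add: repeat_loop_def)

lemma repeat_loop_range:
  assumes "i0 < N"
  shows "\<exists>s<N. repeat_loop z i0 N t = z s"
proof (cases "t < i0")
  case True
  then show ?thesis
    using assms by (intro exI[of _ t]) (simp add: repeat_loop_def)
next
  case False
  have "(t - i0) mod (N - i0) < N - i0"
    using assms by simp
  then show ?thesis
    using False by (intro exI[of _ "i0 + (t - i0) mod (N - i0)"]) (simp add: repeat_loop_def)
qed

lemma repeat_loop_in_edge_shift:
  assumes z: "z \<in> edge_shift K" and "i0 < N" and loop: "tail K (z i0) = tail K (z N)"
  shows "repeat_loop z i0 N \<in> edge_shift K"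
proof -
  let ?u = "repeat_loop z i0 N"
  define q where "q = N - i0"
  have "q > 0"
    using \<open>i0 < N\<close> by (simp add: q_def)
  have u_ge: "?u t = z (i0 + (t - i0) mod q)" if "i0 \<le> t" for t
    using that by (simp add: repeat_loop_def q_def)
  have "head K (?u t) = tail K (?u (t + 1))" for t
  proof (cases "t < i0")
    case True
    then show ?thesis
      using edge_shiftD(2)[OF z, of t] \<open>i0 < N\<close> by (simp add: repeat_loop_agrees)
  next
    case False
    define r where "r = (t - i0) mod q"
    have r: "0 \<le> r" "r < q"
      using \<open>q > 0\<close> by (simp_all add: r_def)
    have ut: "?u t = z (i0 + r)"
      using False u_ge by (simp add: r_def)
    have "(r + 1) mod q = (t - i0 + 1) mod q"
      by (simp add: r_def mod_add_left_eq)
    then have ut1: "?u (t + 1) = z (i0 + (r + 1) mod q)"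
      using False u_ge[of "t + 1"] by (simp add: algebra_simps)
    show ?thesis
    proof (cases "r + 1 < q")
      case True
      then have "(r + 1) mod q = r + 1"
        using r by simp
      then show ?thesis
        using ut ut1 edge_shiftD(2)[OF z, of "i0 + r"] by (simp add: add.assoc)
    next
      case False
      then have "r + 1 = q"
        using r by simp
      then have "(r + 1) mod q = 0" "i0 + r = N - 1"
        by (simp_all add: q_def)
      then show ?thesis
        using ut ut1 loop edge_shiftD(2)[OF z, of "N - 1"] by simp
    qed
  qed
  moreover have "?u t \<in> arcs K" for t
    using repeat_loop_range[OF \<open>i0 < N\<close>, of z t] edge_shiftD(1)[OF z] by metis
  ultimately show ?thesis
    by (simp add: edge_shift_def)
qed

lemma eventually_revisited_backward:
  assumes "finite (verts K)" and "wf_digraph K" and z: "z \<in> edge_shift K"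
  shows "\<exists>N. \<forall>i\<le>N. \<forall>M. \<exists>i'\<le>M. tail K (z i') = tail K (z i)"
proof -
  define W where "W = {v \<in> verts K. \<forall>M. \<exists>i'\<le>M. tail K (z i') = v}"
  have "\<forall>v\<in>verts K - W. \<exists>M. \<forall>i\<le>M. tail K (z i) \<noteq> v"
    by (auto simp: W_def)
  from bchoice[OF this]
  obtain bound where bound: "\<forall>v\<in>verts K - W. \<forall>i\<le>bound v. tail K (z i) \<noteq> v"
    by blast
  define N where "N = Min (insert 0 (bound ` (verts K - W)))"
  have "tail K (z i) \<in> W" if "i \<le> N" for i
  proof (rule ccontr)
    assume "tail K (z i) \<notin> W"
    moreover have "tail K (z i) \<in> verts K"
      using edge_shiftD(1)[OF z, of i] assms(2) by (simp add: wf_digraph_def)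
    ultimately have v: "tail K (z i) \<in> verts K - W"
      by blast
    then have "i \<le> bound (tail K (z i))"
      using assms(1) that by (simp add: N_def)
    then show False
      using bound v by blast
  qed
  then show ?thesis
    by (auto simp: W_def)
qed

lemma backward_asymptotic_component:
  assumes fin: "finite (verts K)" and wf: "wf_digraph K" and z: "z \<in> edge_shift K"
  shows "\<exists>C\<in>components K. \<exists>N. (\<forall>i\<le>N. tail K (z i) \<in> C) \<and>
           backward_asymptotic z (edge_shift (induced_sub K C))"
proof -
  let ?R = "edge_rel K"
  obtain N where revisit: "\<And>i M. i \<le> N \<Longrightarrow> \<exists>i'\<le>M. tail K (z i') = tail K (z i)"
    using eventually_revisited_backward[OF assms] by blast
  define v0 where "v0 = tail K (z N)"
  define C where "C = {w. recurrent K w \<and> (v0, w) \<in> ?R\<^sup>* \<and> (w, v0) \<in> ?R\<^sup>*}"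
  have in_C: "tail K (z i) \<in> C" if iN: "i \<le> N" for i
  proof -
    obtain i' where "i' \<le> i - 1" "tail K (z i') = tail K (z i)"
      using revisit[OF iN] by blast
    then have "(tail K (z i), tail K (z i)) \<in> ?R\<^sup>+"
      using edge_shift_trancl[OF z, of i' i] by simp
    moreover have "tail K (z i) \<in> verts K"
      using edge_shiftD(1)[OF z, of i] wf by (simp add: wf_digraph_def)
    moreover obtain i'' where "i'' \<le> i" "tail K (z i'') = v0"
      using revisit[of N i] by (auto simp: v0_def)
    then have "(v0, tail K (z i)) \<in> ?R\<^sup>*"
      using edge_shift_rtrancl[OF z, of i'' i] by simp
    moreover have "(tail K (z i), v0) \<in> ?R\<^sup>*"
      using edge_shift_rtrancl[OF z iN] by (simp add: v0_def)
    ultimately show ?thesis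
      by (simp add: C_def recurrent_def)
  qed
  have "C \<in> components K"
    using in_C[of N] unfolding components_def C_def v0_def by blast
  obtain i0 where "i0 \<le> N - 1" "tail K (z i0) = tail K (z N)"
    using revisit[of N "N - 1"] by blast
  then have "i0 < N" "repeat_loop z i0 N \<in> edge_shift K"
    using repeat_loop_in_edge_shift[OF z] by simp_all
  have "tail K (repeat_loop z i0 N t) \<in> C" for t
    using repeat_loop_range[OF \<open>i0 < N\<close>, of z t] in_C by (metis less_le)
  then have "repeat_loop z i0 N \<in> edge_shift (induced_sub K C)"
    using \<open>repeat_loop z i0 N \<in> edge_shift K\<close> by (simp add: edge_shift_induced_sub_iff)
  moreover have "\<forall>i\<le>N - 1. z i = repeat_loop z i0 N i"
    by (simp add: repeat_loop_agrees)
  ultimately have "backward_asymptotic z (edge_shift (induced_sub K C))"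
    unfolding backward_asymptotic_def by blast
  then show ?thesis
    using \<open>C \<in> components K\<close> in_C by blast
qed

lemma splice_edge_shift:
  assumes b: "b \<in> edge_shift K" and start: "tail K (x j) = tail K (b N)"
    and x: "\<forall>i\<ge>j. x i \<in> arcs K \<and> head K (x i) = tail K (x (i + 1))"
  shows "(\<lambda>i. if i < j then b (i + (N - j)) else x i) \<in> edge_shift K"
proof -
  define w where "w i = (if i < j then b (i + (N - j)) else x i)" for i
  have "w i \<in> arcs K \<and> head K (w i) = tail K (w (i + 1))" for i
  proof -
    consider "i + 1 < j" | "i + 1 = j" | "j \<le> i"
      by linarith
    then show ?thesis
    proof cases
      case 1
      then show ?thesis
        using edge_shiftD[OF b, of "i + (N - j)"] by (simp add: w_def algebra_simps)
    next
      case 2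
      have "i + (N - j) = N - 1" "i < j"
        using 2 by linarith+
      have "w i = b (N - 1)"
        by (simp add: w_def \<open>i < j\<close> \<open>i + (N - j) = N - 1\<close>)
      moreover have "w (i + 1) = x j"
        using 2 by (simp add: w_def)
      ultimately show ?thesis
        using edge_shiftD[OF b, of "N - 1"] start by simp
    qed (use x in \<open>simp add: w_def\<close>)
  qed
  then show ?thesis
    by (simp add: edge_shift_def w_def)
qed

lemma splice_left_infinite_path:
  assumes b: "b \<in> edge_shift K" and reach: "(tail K (b N), tail K (x j)) \<in> (edge_rel K)\<^sup>*"
    and x: "\<forall>i\<ge>j. x i \<in> arcs K \<and> head K (x i) = tail K (x (i + 1))"
  shows "\<exists>w\<in>edge_shift K. (\<forall>i\<ge>j. w i = x i) \<and> (\<exists>d M. \<forall>i\<le>M. w i = b (i + d))"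
proof -
  have "\<forall>x (j :: int). tail K (x j) = c \<longrightarrow> (\<forall>i\<ge>j. x i \<in> arcs K \<and> head K (x i) = tail K (x (i + 1))) \<longrightarrow>
          (\<exists>w\<in>edge_shift K. (\<forall>i\<ge>j. w i = x i) \<and> (\<exists>d M. \<forall>i\<le>M. w i = b (i + d)))"
    if "(tail K (b N), c) \<in> (edge_rel K)\<^sup>*" for c
    using that
  proof (induction rule: rtrancl_induct)
    case base
    show ?case
    proof (intro allI impI)
      fix x and j :: int
      assume "tail K (x j) = tail K (b N)"
        and "\<forall>i\<ge>j. x i \<in> arcs K \<and> head K (x i) = tail K (x (i + 1))"
      then have "(\<lambda>i. if i < j then b (i + (N - j)) else x i) \<in> edge_shift K"
        by (rule splice_edge_shift[OF b])
      then show "\<exists>w\<in>edge_shift K. (\<forall>i\<ge>j. w i = x i) \<and> (\<exists>d M. \<forall>i\<le>M. w i = b (i + d))"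
        by (intro bexI[of _ "\<lambda>i. if i < j then b (i + (N - j)) else x i"] conjI
            exI[of _ "N - j"] exI[of _ "j - 1"]) auto
    qed
  next
    case (step c' c)
    show ?case
    proof (intro allI impI)
      fix x and j :: int
      assume end_c: "tail K (x j) = c"
        and x: "\<forall>i\<ge>j. x i \<in> arcs K \<and> head K (x i) = tail K (x (i + 1))"
      obtain e where e: "e \<in> arcs K" "tail K e = c'" "head K e = c"
        using step.hyps(2) unfolding edge_rel_def by blast
      define x' where "x' = x(j - 1 := e)"
      have "x' i \<in> arcs K \<and> head K (x' i) = tail K (x' (i + 1))" if "j - 1 \<le> i" for i
        using x that e end_c by (cases "i = j - 1") (simp_all add: x'_def)
      moreover have "tail K (x' (j - 1)) = c'"
        using e by (simp add: x'_def)
      ultimately obtain w where "w \<in> edge_shift K" "\<forall>i\<ge>j - 1. w i = x' i"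
        "\<exists>d M. \<forall>i\<le>M. w i = b (i + d)"
        using step.IH by blast
      moreover have "\<forall>i\<ge>j. w i = x i"
        using calculation(2) by (simp add: x'_def)
      ultimately show "\<exists>w\<in>edge_shift K. (\<forall>i\<ge>j. w i = x i) \<and> (\<exists>d M. \<forall>i\<le>M. w i = b (i + d))"
        by blast
    qed
  qed
  then show ?thesis
    using reach x by blast
qed

text \<open>An intrinsic description of X_{H'}, free of components and trimming
  (see edge_shift_Hprime_iff).\<close>

definition reachable_from_beta :: "('v,'e) pre_digraph \<Rightarrow> ('e \<Rightarrow> 'a) \<Rightarrow> (int \<Rightarrow> 'v set \<times> 'a \<times> 'v set) \<Rightarrow> bool" where
  "reachable_from_beta G L x \<longleftrightarrow>
     (\<forall>j. \<exists>z\<in>subset_shift G L. backward_asymptotic z (beta G L ` sofic G L) \<and> (\<forall>i\<ge>j. z i = x i))"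

lemma Hprime_verts_iff:
  "w \<in> Hprime_verts G L \<longleftrightarrow>
     (\<exists>C\<in>components (H2 G L).
        (\<exists>y\<in>sofic G L. backward_asymptotic (beta G L y) (edge_shift (induced_sub (H2 G L) C))) \<and>
        (\<exists>v\<in>C. (v, w) \<in> (edge_rel (H2 G L))\<^sup>*))"
  by (simp add: Hprime_verts_def Let_def)

lemma edge_shift_Hprime_if_reachable_from_beta:
  assumes G: "graph_ok G" and x: "x \<in> subset_shift G L" and reach: "reachable_from_beta G L x"
  shows "x \<in> edge_shift (Hprime G L)"
proof -
  let ?K = "H2 G L"
  have "fst (x j) \<in> Hprime_verts G L" for j
  proof -
    obtain z u N where z: "z \<in> subset_shift G L" "\<forall>i\<ge>j. z i = x i"
      and "u \<in> beta G L ` sofic G L" and zu: "\<forall>i\<le>N. z i = u i"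
      using reach unfolding reachable_from_beta_def backward_asymptotic_def by blast
    then obtain y where y: "y \<in> sofic G L" and zb: "\<forall>i\<le>N. z i = beta G L y i"
      by blast
    have zK: "z \<in> edge_shift ?K"
      using z(1) by (simp add: edge_shift_H2)
    obtain C N' where C: "C \<in> components ?K" "\<forall>i\<le>N'. fst (z i) \<in> C"
      and "backward_asymptotic z (edge_shift (induced_sub ?K C))"
      using backward_asymptotic_component[OF finite_verts_H2[OF G] wf_digraph_H2 zK] by auto
    then obtain u' N'' where u': "u' \<in> edge_shift (induced_sub ?K C)" "\<forall>i\<le>N''. z i = u' i"
      unfolding backward_asymptotic_def by blast
    have "\<forall>i\<le>min N N''. beta G L y i = u' i"
      using zb u'(2) by (metis min.bounded_iff)
    then have "backward_asymptotic (beta G L y) (edge_shift (induced_sub ?K C))"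
      using u'(1) unfolding backward_asymptotic_def by blast
    moreover have "(fst (z (min N' j)), fst (z j)) \<in> (edge_rel ?K)\<^sup>*"
      using edge_shift_rtrancl[OF zK, of "min N' j" j] by simp
    moreover have "fst (z (min N' j)) \<in> C"
      using C(2) by simp
    ultimately show ?thesis
      unfolding Hprime_verts_iff using C(1) y z(2) by auto
  qed
  then show ?thesis
    using x by (simp add: edge_shift_Hprime)
qed

lemma reachable_from_beta_if_edge_shift_Hprime:
  assumes G: "graph_ok G" and rr: "right_resolving G L" and x: "x \<in> edge_shift (Hprime G L)"
  shows "reachable_from_beta G L x"
  unfolding reachable_from_beta_def
proof
  fix j
  let ?K = "H2 G L" and ?R = "edge_rel (H2 G L)"
  have xs: "x \<in> subset_shift G L" and "fst (x j) \<in> Hprime_verts G L"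
    using x by (simp_all add: edge_shift_Hprime)
  then obtain C y v where C: "C \<in> components ?K" and y: "y \<in> sofic G L"
    and ba: "backward_asymptotic (beta G L y) (edge_shift (induced_sub ?K C))"
    and v: "v \<in> C" "(v, fst (x j)) \<in> ?R\<^sup>*"
    unfolding Hprime_verts_iff by blast
  obtain u N where u: "u \<in> edge_shift (induced_sub ?K C)" "\<forall>i\<le>N. beta G L y i = u i"
    using ba unfolding backward_asymptotic_def by blast
  have "fst (beta G L y N) \<in> C"
    using u by (simp add: edge_shift_induced_sub_iff)
  moreover obtain v0 where C_eq: "C = {w. recurrent ?K w \<and> (v0, w) \<in> ?R\<^sup>* \<and> (w, v0) \<in> ?R\<^sup>*}"
    using C unfolding components_def by blast
  ultimately have "(fst (beta G L y N), v0) \<in> ?R\<^sup>*" "(v0, v) \<in> ?R\<^sup>*"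
    using v(1) by blast+
  then have reach: "(tail ?K (beta G L y N), tail ?K (x j)) \<in> ?R\<^sup>*"
    using v(2) by simp
  have bK: "beta G L y \<in> edge_shift ?K"
    using beta_in_subset_shift[OF G rr y] by (simp add: edge_shift_H2)
  have "x \<in> edge_shift ?K"
    using xs by (simp add: edge_shift_H2)
  then have "\<forall>i\<ge>j. x i \<in> arcs ?K \<and> head ?K (x i) = tail ?K (x (i + 1))"
    using edge_shiftD by blast
  then obtain w d M where w: "w \<in> edge_shift ?K" "\<forall>i\<ge>j. w i = x i" "\<forall>i\<le>M. w i = beta G L y (i + d)"
    using splice_left_infinite_path[where x = x and j = j and N = N, OF bK reach] by blast
  have "beta G L y (i + d) = beta G L (shift_by d y) i" for i
    by (simp add: beta_shift_by shift_by_apply)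
  then have "\<forall>i\<le>M. w i = beta G L (shift_by d y) i"
    using w(3) by simp
  moreover have "shift_by d y \<in> sofic G L"
    using y shift_invariant_sofic[of G L] unfolding shift_invariant_def by blast
  ultimately have "backward_asymptotic w (beta G L ` sofic G L)"
    unfolding backward_asymptotic_def by blast
  moreover have "w \<in> subset_shift G L"
    using w(1) by (simp add: edge_shift_H2)
  ultimately show "\<exists>z\<in>subset_shift G L. backward_asymptotic z (beta G L ` sofic G L) \<and> (\<forall>i\<ge>j. z i = x i)"
    using w(2) by blast
qed

theorem edge_shift_Hprime_iff:
  assumes "graph_ok G" and "right_resolving G L"
  shows "x \<in> edge_shift (Hprime G L) \<longleftrightarrow> x \<in> subset_shift G L \<and> reachable_from_beta G L x"
  using edge_shift_Hprime_if_reachable_from_beta[OF assms(1)]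
    reachable_from_beta_if_edge_shift_Hprime[OF assms] edge_shift_Hprime_subset by blast

lemma edge_shift_Hprime_if_backward_asymptotic:
  assumes "graph_ok G" and "z \<in> subset_shift G L" and "backward_asymptotic z (beta G L ` sofic G L)"
  shows "z \<in> edge_shift (Hprime G L)"
  using assms edge_shift_Hprime_if_reachable_from_beta by (auto simp: reachable_from_beta_def)

lemma beta_in_Hprime:
  assumes "graph_ok G" and "right_resolving G L" and "y \<in> sofic G L"
  shows "beta G L y \<in> edge_shift (Hprime G L)"
proof (rule edge_shift_Hprime_if_backward_asymptotic[OF assms(1) beta_in_subset_shift[OF assms]])
  show "backward_asymptotic (beta G L y) (beta G L ` sofic G L)"
    using assms(3) unfolding backward_asymptotic_def by blast
qed

section \<open>Rigidity of label-preserving automorphisms\<close>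

lemma label_preserving_sliding_block_shrinks:
  assumes G: "graph_ok G" and rr: "right_resolving G L"
    and maps: "\<forall>x\<in>edge_shift (Hprime G L). \<theta> x \<in> edge_shift (Hprime G L)"
    and block: "sliding_block (edge_shift (Hprime G L)) \<theta> m"
    and labels: "\<forall>x\<in>edge_shift (Hprime G L). lab (\<theta> x) = lab x"
    and x: "x \<in> edge_shift (Hprime G L)"
  shows "fst (\<theta> x i) \<subseteq> fst (x i)"
proof -
  let ?X = "edge_shift (Hprime G L)"
  have "reachable_from_beta G L x"
    using x edge_shift_Hprime_iff[OF G rr] by blast
  then obtain z u N where z: "z \<in> subset_shift G L" "\<forall>t\<ge>i - int m. z t = x t"
    and "u \<in> beta G L ` sofic G L" and zu: "\<forall>t\<le>N. z t = u t"
    unfolding reachable_from_beta_def backward_asymptotic_def by blast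
  then obtain y where y: "y \<in> sofic G L" and zb: "\<forall>t\<le>N. z t = beta G L y t"
    by blast
  have "backward_asymptotic z (beta G L ` sofic G L)"
    using \<open>u \<in> beta G L ` sofic G L\<close> zu unfolding backward_asymptotic_def by blast
  then have zX: "z \<in> ?X"
    using edge_shift_Hprime_if_backward_asymptotic[OF G z(1)] by blast
  have bX: "beta G L y \<in> ?X"
    using beta_in_Hprime[OF G rr y] .
  txt \<open>At a time i1 far in the past, z looks like beta y, whose vertex sets are maximal.\<close>
  define i1 where "i1 = min (N - int m) i"
  have "\<forall>t\<in>{i1 - int m..i1 + int m}. z t = beta G L y t"
    using zb by (auto simp: i1_def)
  then have "\<theta> z i1 = \<theta> (beta G L y) i1"
    using block zX bX unfolding sliding_block_def by blast
  moreover have "fst (\<theta> (beta G L y) i1) \<subseteq> fst (beta G L y i1)"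
  proof -
    have "\<theta> (beta G L y) \<in> subset_shift G L"
      using maps bX edge_shift_Hprime_subset by blast
    moreover have "lab (\<theta> (beta G L y)) = y"
      using labels bX by simp
    ultimately show ?thesis
      using beta_maximal[of "\<theta> (beta G L y)" G L i1] by simp
  qed
  moreover have "beta G L y i1 = z i1"
    using zb by (simp add: i1_def)
  ultimately have "fst (\<theta> z i1) \<subseteq> fst (z i1)"
    by simp
  moreover have "\<theta> z \<in> subset_shift G L"
    using maps zX edge_shift_Hprime_subset by blast
  ultimately have "fst (\<theta> z i) \<subseteq> fst (z i)"
    using subset_shift_vertex_mono[OF _ z(1), of "\<theta> z" i1 i] labels zX by (simp add: i1_def)
  moreover have "\<forall>t\<in>{i - int m..i + int m}. z t = x t"
    using z(2) by simp
  then have "\<theta> z i = \<theta> x i"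
    using block zX x unfolding sliding_block_def by blast
  moreover have "z i = x i"
    using z(2) by simp
  ultimately show ?thesis
    by simp
qed

theorem label_preserving_automorphism_eq_id:
  assumes G: "graph_ok G" and rr: "right_resolving G L"
    and \<theta>: "conjugacy (edge_shift (Hprime G L)) (edge_shift (Hprime G L)) \<theta>"
    and labels: "\<forall>x\<in>edge_shift (Hprime G L). lab (\<theta> x) = lab x"
    and x: "x \<in> edge_shift (Hprime G L)"
  shows "\<theta> x = x"
proof -
  let ?X = "edge_shift (Hprime G L)"
  define \<theta>' where "\<theta>' = inv_into ?X \<theta>"
  have bij: "bij_betw \<theta> ?X ?X"
    using conjugacy_bij_betw[OF \<theta>] .
  have \<theta>': "conjugacy ?X ?X \<theta>'"
    unfolding \<theta>'_def using conjugacy_inv_into[OF \<theta> shift_invariant_edge_shift] .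
  have maps: "\<forall>x\<in>?X. \<theta> x \<in> ?X" "\<forall>x\<in>?X. \<theta>' x \<in> ?X"
    using bij_betw_apply[OF bij] bij_betw_apply[OF conjugacy_bij_betw[OF \<theta>']] by blast+
  have inverse: "\<theta>' (\<theta> x) = x"
    using bij_betw_inv_into_left[OF bij x] by (simp add: \<theta>'_def)
  have labels': "\<forall>x\<in>?X. lab (\<theta>' x) = lab x"
    using labels maps(2) bij_betw_inv_into_right[OF bij] by (metis \<theta>'_def)
  have compact: "compactin seq_top ?X"
    using compactin_edge_shift[OF finite_arcs_Hprime[OF G]] .
  obtain m m' where "sliding_block ?X \<theta> m" "sliding_block ?X \<theta>' m'"
    using conjugacy_sliding_block[OF compact shift_invariant_edge_shift] \<theta> \<theta>' by metis
  note shrinks = label_preserving_sliding_block_shrinks[OF G rr]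
  have "fst (\<theta> x i) = fst (x i)" for i
  proof
    show "fst (\<theta> x i) \<subseteq> fst (x i)"
      using shrinks[OF maps(1) \<open>sliding_block ?X \<theta> m\<close> labels x] .
    show "fst (x i) \<subseteq> fst (\<theta> x i)"
      using shrinks[OF maps(2) \<open>sliding_block ?X \<theta>' m'\<close> labels'] maps(1) x inverse by metis
  qed
  moreover have "\<theta> x \<in> subset_shift G L" "x \<in> subset_shift G L"
    using maps(1) x edge_shift_Hprime_subset by blast+
  ultimately show ?thesis
    using labels x subset_shiftD(5) by (metis ext)
qed

section \<open>The induced conjugacy\<close>

definition subset_map :: "('v,'e) pre_digraph \<Rightarrow> ('e \<Rightarrow> 'a) \<Rightarrow> ('w,'f) pre_digraph
      \<Rightarrow> ((int \<Rightarrow> 'e) \<Rightarrow> (int \<Rightarrow> 'f)) \<Rightarrow> ((int \<Rightarrow> 'a) \<Rightarrow> (int \<Rightarrow> 'b))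
      \<Rightarrow> (int \<Rightarrow> 'v set \<times> 'a \<times> 'v set) \<Rightarrow> (int \<Rightarrow> 'w set \<times> 'b \<times> 'w set)" where
  "subset_map G L H \<phi> \<psi> x = subset_point H (\<phi> ` lifts G L x) (\<psi> (lab x))"

lemma lab_subset_map [simp]: "lab (subset_map G L H \<phi> \<psi> x) = \<psi> (lab x)"
  by (simp add: subset_map_def)

locale labeled_conjugacy =
  fixes G :: "('v,'e) pre_digraph" and LG :: "'e \<Rightarrow> 'a"
    and H :: "('w,'f) pre_digraph" and LH :: "'f \<Rightarrow> 'b"
    and \<psi> :: "(int \<Rightarrow> 'a) \<Rightarrow> (int \<Rightarrow> 'b)"
    and \<phi> :: "(int \<Rightarrow> 'e) \<Rightarrow> (int \<Rightarrow> 'f)"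
  assumes graph_G: "graph_ok G" and graph_H: "graph_ok H"
    and rr_G: "right_resolving G LG" and rr_H: "right_resolving H LH"
    and conj_\<psi>: "conjugacy (sofic G LG) (sofic H LH) \<psi>"
    and conj_\<phi>: "conjugacy (edge_shift G) (edge_shift H) \<phi>"
    and labels_\<phi>: "\<forall>k\<in>edge_shift G. label_map LH (\<phi> k) = \<psi> (label_map LG k)"
begin

abbreviation "\<phi>' \<equiv> inv_into (edge_shift G) \<phi>"
abbreviation "\<psi>' \<equiv> inv_into (sofic G LG) \<psi>"

lemma bij_\<phi>: "bij_betw \<phi> (edge_shift G) (edge_shift H)"
  and bij_\<psi>: "bij_betw \<psi> (sofic G LG) (sofic H LH)"
  using conjugacy_bij_betw conj_\<phi> conj_\<psi> by blast+

lemma inverse: "labeled_conjugacy H LH G LG \<psi>' \<phi>'"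
proof
  show "conjugacy (sofic H LH) (sofic G LG) \<psi>'"
    using conjugacy_inv_into[OF conj_\<psi> shift_invariant_sofic] .
  show "conjugacy (edge_shift H) (edge_shift G) \<phi>'"
    using conjugacy_inv_into[OF conj_\<phi> shift_invariant_edge_shift] .
  show "\<forall>k\<in>edge_shift H. label_map LG (\<phi>' k) = \<psi>' (label_map LH k)"
  proof
    fix k assume k: "k \<in> edge_shift H"
    have k': "\<phi>' k \<in> edge_shift G"
      using bij_betw_apply[OF bij_betw_inv_into[OF bij_\<phi>] k] .
    have "label_map LH k = \<psi> (label_map LG (\<phi>' k))"
      using labels_\<phi> k' bij_betw_inv_into_right[OF bij_\<phi> k] by force
    moreover have "label_map LG (\<phi>' k) \<in> sofic G LG"
      using k' by (simp add: sofic_def)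
    ultimately show "label_map LG (\<phi>' k) = \<psi>' (label_map LH k)"
      using bij_betw_inv_into_left[OF bij_\<psi>] by simp
  qed
qed (use graph_G graph_H rr_G rr_H in auto)

abbreviation "\<Phi> \<equiv> subset_map G LG H \<phi> \<psi>"
abbreviation "\<Phi>' \<equiv> subset_map H LH G \<phi>' \<psi>'"

lemma label_map_\<phi>_lifts:
  assumes "k \<in> lifts G LG x"
  shows "label_map LH (\<phi> k) = \<psi> (lab x)"
  using labels_\<phi> lifts_edge_shift[OF assms] lifts_label[OF assms] by simp

lemma \<phi>_lifts_subset: "\<phi> ` lifts G LG x \<subseteq> edge_shift H"
  using bij_betw_apply[OF bij_\<phi>] lifts_edge_shift by blast

lemma subset_map_in_subset_shift:
  assumes "x \<in> subset_shift G LG"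
  shows "\<Phi> x \<in> subset_shift H LH"
  unfolding subset_map_def
proof (rule subset_point_in_subset_shift[OF graph_H rr_H \<phi>_lifts_subset])
  show "\<phi> ` lifts G LG x \<noteq> {}"
    using lifts_nonempty[OF assms] by blast
  show "label_map LH k = \<psi> (lab x)" if "k \<in> \<phi> ` lifts G LG x" for k
    using that label_map_\<phi>_lifts by blast
qed

lemma sliding_block_\<phi>: "\<exists>m. sliding_block (edge_shift G) \<phi> m"
proof (rule conjugacy_sliding_block[OF compactin_edge_shift shift_invariant_edge_shift conj_\<phi>])
  show "finite (arcs G)"
    using graph_G by (simp add: graph_ok_def fin_digraph_def fin_digraph_axioms_def)
qed

lemma lifts_subset_map_subset:
  assumes x: "x \<in> subset_shift G LG" and n: "n \<in> lifts H LH (\<Phi> x)"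
  shows "n \<in> \<phi> ` lifts G LG x"
proof -
  have nH: "n \<in> edge_shift H" and n_label: "label_map LH n = \<psi> (lab x)"
    using lifts_edge_shift[OF n] lifts_label[OF n] by simp_all
  define k where "k = \<phi>' n"
  have kG: "k \<in> edge_shift G"
    unfolding k_def using bij_betw_apply[OF bij_betw_inv_into[OF bij_\<phi>] nH] .
  have n_eq: "n = \<phi> k"
    unfolding k_def using bij_betw_inv_into_right[OF bij_\<phi> nH] by simp
  have "label_map LG k = \<psi>' (label_map LH n)"
    unfolding k_def using labeled_conjugacy.labels_\<phi>[OF inverse] nH by blast
  also have "\<dots> = lab x"
    using n_label bij_betw_inv_into_left[OF bij_\<psi> lab_in_sofic[OF x]] by simp
  finally have k_label: "label_map LG k = lab x" .
  obtain m where block: "sliding_block (edge_shift H) \<phi>' m"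
    using labeled_conjugacy.sliding_block_\<phi>[OF inverse] by blast
  have "tail G (k j) \<in> fst (x j)" for j
  proof -
    txt \<open>By right-resolvingness, n agrees on a long window with the image of some lift k0 of x;
      as phi^-1 has memory m, this forces k j = k0 j.\<close>
    define a where "a = j - int m"
    have "tail H (n a) \<in> fst (\<Phi> x a)"
      using lifts_tail[OF n] .
    then obtain k0 where k0: "k0 \<in> lifts G LG x" "tail H (n a) = tail H (\<phi> k0 a)"
      by (auto simp: subset_map_def)
    have k0G: "k0 \<in> edge_shift G"
      using lifts_edge_shift[OF k0(1)] .
    have \<phi>k0: "\<phi> k0 \<in> edge_shift H"
      using bij_betw_apply[OF bij_\<phi> k0G] .
    have "\<phi> k0 t = n t" if "t \<in> {a..j + int m}" for t
    proof (rule right_resolving_paths_agree[OF rr_H \<phi>k0 nH _ _ that])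
      show "tail H (\<phi> k0 a) = tail H (n a)"
        using k0(2) by simp
      show "\<forall>s\<in>{a..j + int m}. LH (\<phi> k0 s) = LH (n s)"
        using label_map_\<phi>_lifts[OF k0(1)] n_label by (metis label_map_apply)
    qed
    then have "\<forall>t\<in>{j - int m..j + int m}. \<phi> k0 t = n t"
      by (simp add: a_def)
    then have "\<phi>' (\<phi> k0) j = \<phi>' n j"
      using block \<phi>k0 nH unfolding sliding_block_def by blast
    then have "k0 j = k j"
      using bij_betw_inv_into_left[OF bij_\<phi> k0G] by (simp add: k_def)
    then show ?thesis
      using lifts_tail[OF k0(1), of j] by simp
  qed
  then have "k \<in> lifts G LG x"
    using kG k_label by (simp add: lifts_def)
  then show ?thesis
    using n_eq by blast
qed

lemma lifts_subset_map:
  assumes x: "x \<in> subset_shift G LG"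
  shows "lifts H LH (\<Phi> x) = \<phi> ` lifts G LG x"
proof (intro equalityI subsetI)
  fix n assume "n \<in> \<phi> ` lifts G LG x"
  then obtain k where k: "k \<in> lifts G LG x" "n = \<phi> k"
    by blast
  have "n \<in> edge_shift H"
    using \<phi>_lifts_subset k by blast
  moreover have "label_map LH n = lab (\<Phi> x)"
    using label_map_\<phi>_lifts[OF k(1)] k(2) by simp
  moreover have "tail H (n j) \<in> fst (\<Phi> x j)" for j
    using k by (simp add: subset_map_def)
  ultimately show "n \<in> lifts H LH (\<Phi> x)"
    by (simp add: lifts_def)
qed (use lifts_subset_map_subset[OF x] in blast)

lemma subset_map_left_inverse:
  assumes x: "x \<in> subset_shift G LG"
  shows "\<Phi>' (\<Phi> x) = x"
proof -
  have "\<phi>' ` lifts H LH (\<Phi> x) = lifts G LG x"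
    unfolding lifts_subset_map[OF x]
    using bij_betw_imp_inj_on[OF bij_\<phi>] lifts_edge_shift by (meson inv_into_image_cancel subsetI)
  moreover have "\<psi>' (lab (\<Phi> x)) = lab x"
    using bij_betw_inv_into_left[OF bij_\<psi> lab_in_sofic[OF x]] by simp
  ultimately show ?thesis
    using subset_point_lifts[OF x] by (simp add: subset_map_def)
qed

lemma subset_map_right_inverse:
  assumes y: "y \<in> subset_shift H LH"
  shows "\<Phi> (\<Phi>' y) = y"
proof -
  have "\<phi> ` lifts G LG (\<Phi>' y) = lifts H LH y"
    unfolding labeled_conjugacy.lifts_subset_map[OF inverse y]
    using image_inv_into_cancel[OF bij_betw_imp_surj_on[OF bij_\<phi>]] lifts_edge_shift by (meson subsetI)
  moreover have "\<psi> (lab (\<Phi>' y)) = lab y"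
    using bij_betw_inv_into_right[OF bij_\<psi> lab_in_sofic[OF y]] by simp
  ultimately show ?thesis
    using subset_point_lifts[OF y] by (simp add: subset_map_def)
qed

lemma \<phi>_lifts_transfer:
  assumes block: "sliding_block (edge_shift G) \<phi> m"
    and x: "x \<in> subset_shift G LG" "x' \<in> subset_shift G LG"
    and agree: "\<forall>t\<in>{i - int (Suc m)..i + int (Suc m)}. x t = x' t"
    and k: "k \<in> lifts G LG x"
  shows "\<exists>k'\<in>lifts G LG x'. \<phi> k' i = \<phi> k i \<and> \<phi> k' (i + 1) = \<phi> k (i + 1)"
proof -
  obtain k' where k': "k' \<in> lifts G LG x'" "\<forall>t\<in>{i - int (Suc m)..i + int (Suc m)}. k' t = k t"
    using lifts_transfer[OF rr_G x agree _ k] by auto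
  have "\<phi> k' j = \<phi> k j" if "j \<in> {i, i + 1}" for j
  proof -
    have "\<forall>t\<in>{j - int m..j + int m}. k' t = k t"
      using k'(2) that by auto
    then show ?thesis
      using block lifts_edge_shift[OF k'(1)] lifts_edge_shift[OF k] unfolding sliding_block_def by blast
  qed
  then show ?thesis
    using k'(1) by blast
qed

lemma subset_map_sliding_block:
  assumes block: "sliding_block (edge_shift G) \<phi> m"
  shows "sliding_block (subset_shift G LG) \<Phi> (Suc m)"
  unfolding sliding_block_def
proof (intro ballI allI impI)
  fix x x' i
  assume x: "x \<in> subset_shift G LG" "x' \<in> subset_shift G LG"
    and agree: "\<forall>t\<in>{i - int (Suc m)..i + int (Suc m)}. x t = x' t"
  then have agree': "\<forall>t\<in>{i - int (Suc m)..i + int (Suc m)}. x' t = x t"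
    by simp
  have sub: "(\<lambda>k. tail H (k j)) ` \<phi> ` lifts G LG x1 \<subseteq> (\<lambda>k. tail H (k j)) ` \<phi> ` lifts G LG x2"
    if x12: "x1 \<in> subset_shift G LG" "x2 \<in> subset_shift G LG"
      and agree12: "\<forall>t\<in>{i - int (Suc m)..i + int (Suc m)}. x1 t = x2 t" and j: "j \<in> {i, i + 1}" for x1 x2 j
  proof
    fix v assume "v \<in> (\<lambda>k. tail H (k j)) ` \<phi> ` lifts G LG x1"
    then obtain k where k: "k \<in> lifts G LG x1" "v = tail H (\<phi> k j)"
      by blast
    then obtain k' where k': "k' \<in> lifts G LG x2" "\<phi> k' i = \<phi> k i" "\<phi> k' (i + 1) = \<phi> k (i + 1)"
      using \<phi>_lifts_transfer[OF block x12 agree12] by blast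
    then have "v = (\<lambda>k. tail H (k j)) (\<phi> k')"
      using k(2) j by auto
    then show "v \<in> (\<lambda>k. tail H (k j)) ` \<phi> ` lifts G LG x2"
      using k'(1) by blast
  qed
  have tails: "(\<lambda>k. tail H (k j)) ` \<phi> ` lifts G LG x = (\<lambda>k. tail H (k j)) ` \<phi> ` lifts G LG x'"
    if "j \<in> {i, i + 1}" for j
    using sub[OF x agree that] sub[OF x(2,1) agree' that] by (rule equalityI)
  have "\<psi> (lab x) i = \<psi> (lab x') i"
  proof -
    obtain k where k: "k \<in> lifts G LG x"
      using lifts_nonempty[OF x(1)] by blast
    then obtain k' where "k' \<in> lifts G LG x'" "\<phi> k' i = \<phi> k i"
      using \<phi>_lifts_transfer[OF block x agree] by blast
    then show ?thesis
      using label_map_\<phi>_lifts[OF k] label_map_\<phi>_lifts[of k' x'] by (metis label_map_apply)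
  qed
  then show "\<Phi> x i = \<Phi> x' i"
    using tails[of i] tails[of "i + 1"] by (simp add: subset_map_def subset_point_def)
qed

lemma subset_map_shift:
  assumes x: "x \<in> subset_shift G LG"
  shows "\<Phi> (shift x) = shift (\<Phi> x)"
proof -
  have "\<phi> ` lifts G LG (shift x) = shift ` \<phi> ` lifts G LG x"
  proof -
    have commute: "\<phi> (shift k) = shift (\<phi> k)" if "k \<in> lifts G LG x" for k
      using conj_\<phi> lifts_edge_shift[OF that] by (simp add: conjugacy_def)
    have "\<phi> ` lifts G LG (shift x) = (\<lambda>k. \<phi> (shift k)) ` lifts G LG x"
      by (simp add: shift_eq_shift_by_1 lifts_shift_by image_image)
    also have "\<dots> = (\<lambda>k. shift (\<phi> k)) ` lifts G LG x"
      using commute by (rule image_cong[OF refl])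
    also have "\<dots> = shift ` \<phi> ` lifts G LG x"
      by (simp add: image_image)
    finally show ?thesis .
  qed
  moreover have "\<psi> (lab (shift x)) = shift (\<psi> (lab x))"
    using conj_\<psi> lab_in_sofic[OF x] by (simp add: conjugacy_def shift_eq_shift_by_1 label_map_shift_by)
  ultimately show ?thesis
    by (simp add: subset_map_def shift_eq_shift_by_1 subset_point_shift_by)
qed

lemma subset_map_beta:
  assumes y: "y \<in> sofic G LG"
  shows "\<Phi> (beta G LG y) = beta H LH (\<psi> y)"
proof -
  have "\<phi> ` {k \<in> edge_shift G. label_map LG k = y} = {n \<in> edge_shift H. label_map LH n = \<psi> y}"
  proof (intro equalityI subsetI)
    fix n assume "n \<in> \<phi> ` {k \<in> edge_shift G. label_map LG k = y}"
    then show "n \<in> {n \<in> edge_shift H. label_map LH n = \<psi> y}"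
      using bij_betw_apply[OF bij_\<phi>] labels_\<phi> by auto
  next
    fix n assume n: "n \<in> {n \<in> edge_shift H. label_map LH n = \<psi> y}"
    then have "\<phi>' n \<in> edge_shift G" "\<phi> (\<phi>' n) = n"
      using bij_betw_apply[OF bij_betw_inv_into[OF bij_\<phi>]] bij_betw_inv_into_right[OF bij_\<phi>] by auto
    moreover have "label_map LG (\<phi>' n) = y"
      using labeled_conjugacy.labels_\<phi>[OF inverse] n bij_betw_inv_into_left[OF bij_\<psi> y] by auto
    ultimately show "n \<in> \<phi> ` {k \<in> edge_shift G. label_map LG k = y}"
      by (metis (mono_tags, lifting) image_eqI mem_Collect_eq)
  qed
  then show ?thesis
    by (simp add: subset_map_def lifts_beta beta_eq_subset_point[of H])
qed

lemma subset_map_Hprime: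
  assumes x: "x \<in> edge_shift (Hprime G LG)"
  shows "\<Phi> x \<in> edge_shift (Hprime H LH)"
proof -
  have xs: "x \<in> subset_shift G LG" and reach: "reachable_from_beta G LG x"
    using x edge_shift_Hprime_iff[OF graph_G rr_G] by blast+
  obtain m where block: "sliding_block (subset_shift G LG) \<Phi> m"
    using sliding_block_\<phi> subset_map_sliding_block by blast
  have "reachable_from_beta H LH (\<Phi> x)"
    unfolding reachable_from_beta_def
  proof
    fix j
    obtain z u N where z: "z \<in> subset_shift G LG" "\<forall>i\<ge>j - int m. z i = x i"
      and "u \<in> beta G LG ` sofic G LG" and zu: "\<forall>i\<le>N. z i = u i"
      using reach unfolding reachable_from_beta_def backward_asymptotic_def by blast
    then obtain y where y: "y \<in> sofic G LG" and zb: "\<forall>i\<le>N. z i = beta G LG y i"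
      by blast
    have "\<Phi> z i = beta H LH (\<psi> y) i" if "i \<le> N - int m" for i
    proof -
      have "\<forall>t\<in>{i - int m..i + int m}. z t = beta G LG y t"
        using zb that by auto
      then have "\<Phi> z i = \<Phi> (beta G LG y) i"
        using block z(1) beta_in_subset_shift[OF graph_G rr_G y] unfolding sliding_block_def by blast
      then show ?thesis
        using subset_map_beta[OF y] by simp
    qed
    moreover have "\<psi> y \<in> sofic H LH"
      using bij_betw_apply[OF bij_\<psi> y] .
    ultimately have "backward_asymptotic (\<Phi> z) (beta H LH ` sofic H LH)"
      unfolding backward_asymptotic_def by blast
    moreover have "\<Phi> z i = \<Phi> x i" if "j \<le> i" for i
    proof -
      have "\<forall>t\<in>{i - int m..i + int m}. z t = x t"
        using z(2) that by auto
      then show ?thesis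
        using block z(1) xs unfolding sliding_block_def by blast
    qed
    ultimately show "\<exists>z'\<in>subset_shift H LH. backward_asymptotic z' (beta H LH ` sofic H LH) \<and>
        (\<forall>i\<ge>j. z' i = \<Phi> x i)"
      using subset_map_in_subset_shift[OF z(1)] by blast
  qed
  then show ?thesis
    using edge_shift_Hprime_iff[OF graph_H rr_H] subset_map_in_subset_shift[OF xs] by blast
qed

lemma subset_map_continuous_map:
  "continuous_map (subtopology seq_top (edge_shift (Hprime G LG)))
     (subtopology seq_top (edge_shift (Hprime H LH))) \<Phi>"
proof (rule continuous_map_into_subtopology)
  obtain m where "sliding_block (subset_shift G LG) \<Phi> m"
    using sliding_block_\<phi> subset_map_sliding_block by blast
  then have "sliding_block (edge_shift (Hprime G LG)) \<Phi> m"
    using sliding_block_subset edge_shift_Hprime_subset by blast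
  then show "continuous_map (subtopology seq_top (edge_shift (Hprime G LG))) seq_top \<Phi>"
    by (rule sliding_block_continuous_map)
  show "\<Phi> \<in> topspace (subtopology seq_top (edge_shift (Hprime G LG))) \<rightarrow> edge_shift (Hprime H LH)"
    using subset_map_Hprime by simp
qed

theorem subset_map_conjugacy:
  "conjugacy (edge_shift (Hprime G LG)) (edge_shift (Hprime H LH)) \<Phi>"
proof -
  have "homeomorphic_maps (subtopology seq_top (edge_shift (Hprime G LG)))
          (subtopology seq_top (edge_shift (Hprime H LH))) \<Phi> \<Phi>'"
    unfolding homeomorphic_maps_def
    using subset_map_continuous_map labeled_conjugacy.subset_map_continuous_map[OF inverse]
      subset_map_left_inverse[OF edge_shift_Hprime_subset[THEN subsetD]]
      subset_map_right_inverse[OF edge_shift_Hprime_subset[THEN subsetD]]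
    by auto
  then have "homeomorphic_map (subtopology seq_top (edge_shift (Hprime G LG)))
               (subtopology seq_top (edge_shift (Hprime H LH))) \<Phi>"
    by (rule homeomorphic_maps_imp_map)
  moreover have "\<forall>x\<in>edge_shift (Hprime G LG). \<Phi> (shift x) = shift (\<Phi> x)"
    using subset_map_shift edge_shift_Hprime_subset by blast
  ultimately show ?thesis
    by (simp add: conjugacy_def)
qed

theorem subset_map_unique:
  assumes conj: "conjugacy (edge_shift (Hprime G LG)) (edge_shift (Hprime H LH)) \<theta>"
    and labels: "\<forall>x\<in>edge_shift (Hprime G LG). lab (\<theta> x) = \<psi> (lab x)"
    and x: "x \<in> edge_shift (Hprime G LG)"
  shows "\<theta> x = \<Phi> x"
proof -
  let ?X = "edge_shift (Hprime G LG)" and ?Y = "edge_shift (Hprime H LH)"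
  define \<Phi>\<^sub>i where "\<Phi>\<^sub>i = inv_into ?X \<Phi>"
  have bij: "bij_betw \<Phi> ?X ?Y"
    using conjugacy_bij_betw[OF subset_map_conjugacy] .
  have "conjugacy ?Y ?X \<Phi>\<^sub>i"
    unfolding \<Phi>\<^sub>i_def using conjugacy_inv_into[OF subset_map_conjugacy shift_invariant_edge_shift] .
  then have automorphism: "conjugacy ?Y ?Y (\<theta> \<circ> \<Phi>\<^sub>i)"
    using conj by (rule conjugacy_compose)
  have "lab ((\<theta> \<circ> \<Phi>\<^sub>i) y) = lab y" if "y \<in> ?Y" for y
  proof -
    have "\<Phi>\<^sub>i y \<in> ?X" "\<Phi> (\<Phi>\<^sub>i y) = y"
      unfolding \<Phi>\<^sub>i_def using bij_betw_apply[OF bij_betw_inv_into[OF bij] that]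
        bij_betw_inv_into_right[OF bij that] by simp_all
    then show ?thesis
      using labels by (metis comp_apply lab_subset_map)
  qed
  then have "(\<theta> \<circ> \<Phi>\<^sub>i) (\<Phi> x) = \<Phi> x"
    using label_preserving_automorphism_eq_id[OF graph_H rr_H automorphism] bij_betw_apply[OF bij x] by blast
  then show ?thesis
    using bij_betw_inv_into_left[OF bij x] by (simp add: \<Phi>\<^sub>i_def)
qed

end

theorem theorem4p6:
  fixes G :: "('v,'e) pre_digraph" and LG :: "'e \<Rightarrow> 'a"
    and H :: "('w,'f) pre_digraph" and LH :: "'f \<Rightarrow> 'b"
    and \<psi> :: "(int \<Rightarrow> 'a) \<Rightarrow> (int \<Rightarrow> 'b)"
    and \<phi> :: "(int \<Rightarrow> 'e) \<Rightarrow> (int \<Rightarrow> 'f)"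
  assumes "graph_ok G" and "graph_ok H"
    and "right_resolving G LG" and "right_resolving H LH"
    and "conjugacy (sofic G LG) (sofic H LH) \<psi>"
    and "conjugacy (edge_shift G) (edge_shift H) \<phi>"
    and "\<forall>x\<in>edge_shift G. label_map LH (\<phi> x) = \<psi> (label_map LG x)"
  shows "\<exists>\<phi>'. (conjugacy (edge_shift (Hprime G LG)) (edge_shift (Hprime H LH)) \<phi>' \<and>
              (\<forall>x\<in>edge_shift (Hprime G LG).
                 label_map subset_label (\<phi>' x) = \<psi> (label_map subset_label x))) \<and>
             (\<forall>\<phi>''. conjugacy (edge_shift (Hprime G LG)) (edge_shift (Hprime H LH)) \<phi>'' \<and>
                    (\<forall>x\<in>edge_shift (Hprime G LG).
                       label_map subset_label (\<phi>'' x) = \<psi> (label_map subset_label x))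
                    \<longrightarrow> (\<forall>x\<in>edge_shift (Hprime G LG). \<phi>'' x = \<phi>' x))"
proof -
  interpret labeled_conjugacy G LG H LH \<psi> \<phi>
    using assms by unfold_locales
  show ?thesis
    using subset_map_conjugacy lab_subset_map subset_map_unique by blast
qed

end
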